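(* Let $W$ be a sunword whose alphabet $\Sigma$ contains at least three proper letters, let $a$ be the least proper letter in the order $\prec$ induced by $W$, and let $w=\sigma a^{\lambda_1}\epsilon\tilde{w}\epsilon a^{\lambda_s}$ be a representative of $W$, equal to its own pattern and written with maximal powers, where $\tilde{w}$ is a word over $\Sigma\setminus\{\sigma\}$. Let $z$ be the greatest element of $(\Sigma\setminus\{\epsilon\},\prec)$. Then all exponents of $z$ in $w$ are even.
   Context: Multisuns: a multisun is a graph with no induced $K_4$ minus an edge, of odd order, whose maximal cliques of size $2$ form a Hamiltonian cycle $C$ (the rim); the other maximal cliques consist of pairwise nonconsecutive vertices of $C$ (inscribed cliques). A sub-multisun deletes the edge sets of some, but not all, inscribed cliques. An $AB$-path (inscribed cliques $A,B$, possibly equal) is a subpath of $C$ with one end in $A$, the other in $B$, internal vertices in no inscribed clique; $A$-path $=AA$-path; for $v\in B$ an $Av$-path is an $AB$-path ending at $v$ in $B$. N-conditions: (N1) every $A$-path has an even number $\ge4$ of vertices; (N2) inscribed cliques have odd size; (N3) all inscribed cliques share a vertex $\xi\in V(C)$ and are otherwise disjoint; (N4) every $A\xi$-path has an even number of vertices; (N5) for $A\ne B$ every $AB$-path has an odd number of vertices. A sunoid is a multisun such that it and all its sub-multisuns satisfy the N-conditions. Words: alphabet $\Sigma$ with distinguished letter $\epsilon$; $x^k$ is $k$ copies of $x$. The pattern $\pi(w)$ is obtained by repeatedly deleting $\epsilon\epsilon$; $v\sim w$ if related by cyclic shift and/or reversal; $u\approx v$ iff $\pi(u)\sim\pi(v)$;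 $[w]$ is the class (cyclic word), $w$ a representative. For a multisun satisfying the N-conditions, label rim vertices by $\sigma$ (in $\ge2$ inscribed cliques), a letter specific to $X$ (only in inscribed clique $X$), or $\epsilon$ (in none); reading around the rim gives $w_G$ and $[w_G]$ is its s-word; letters other than $\epsilon,\sigma$ are proper letters. A sunword is the s-word of a sunoid. Induced order: take a representative $\sigma u$ equal to its own pattern, replace each interval $xx$ of $u$ ($x$ proper) by $x\epsilon\epsilon x$ to get $z'$, let $v=\sigma\epsilon\epsilon z'\epsilon\epsilon=v_1\cdots v_N$ arranged cyclically; $\sigma$ is least and for proper $x\ne y$, $x\prec y$ iff the least cyclic distance from position $1$ to a position labeled $x$ is smaller than for $y$. *)

theory Defs
  imports Main
begin

definition graph :: "'v set \<Rightarrow> ('v \<Rightarrow> 'v \<Rightarrow> bool) \<Rightarrow> bool" where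
  "graph V E \<longleftrightarrow> finite V \<and> (\<forall>x y. E x y \<longrightarrow> x \<in> V \<and> y \<in> V)
     \<and> (\<forall>x y. E x y \<longrightarrow> E y x) \<and> (\<forall>x. \<not> E x x)"

definition clique :: "'v set \<Rightarrow> ('v \<Rightarrow> 'v \<Rightarrow> bool) \<Rightarrow> 'v set \<Rightarrow> bool" where
  "clique V E K \<longleftrightarrow> K \<subseteq> V \<and> (\<forall>x\<in>K. \<forall>y\<in>K. x \<noteq> y \<longrightarrow> E x y)"

definition maximal_clique :: "'v set \<Rightarrow> ('v \<Rightarrow> 'v \<Rightarrow> bool) \<Rightarrow> 'v set \<Rightarrow> bool" where
  "maximal_clique V E K \<longleftrightarrow> clique V E K \<and> \<not> (\<exists>K'. clique V E K' \<and> K \<subset> K')"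

definition no_induced_diamond :: "'v set \<Rightarrow> ('v \<Rightarrow> 'v \<Rightarrow> bool) \<Rightarrow> bool" where
  "no_induced_diamond V E \<longleftrightarrow>
     \<not> (\<exists>a\<in>V. \<exists>b\<in>V. \<exists>c\<in>V. \<exists>d\<in>V. distinct [a, b, c, d] \<and>
          E a b \<and> E a c \<and> E a d \<and> E b c \<and> E b d \<and> \<not> E c d)"

text \<open>The rim is encoded by an enumeration c of the vertices along the Hamiltonian
  cycle: c 0, c 1, ..., c (n-1), with n = card V; c i and c ((i+1) mod n) are consecutive.\<close>

definition consecutive :: "'v set \<Rightarrow> (nat \<Rightarrow> 'v) \<Rightarrow> 'v \<Rightarrow> 'v \<Rightarrow> bool" where
  "consecutive V c x y \<longleftrightarrow> (\<exists>i < card V. {x, y} = {c i, c (Suc i mod card V)})"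

definition hamiltonian_rim :: "'v set \<Rightarrow> ('v \<Rightarrow> 'v \<Rightarrow> bool) \<Rightarrow> (nat \<Rightarrow> 'v) \<Rightarrow> bool" where
  "hamiltonian_rim V E c \<longleftrightarrow> card V \<ge> 3 \<and> bij_betw c {..<card V} V \<and>
     {K. maximal_clique V E K \<and> card K = 2} = {{c i, c (Suc i mod card V)} | i. i < card V}"

definition inscribed :: "'v set \<Rightarrow> ('v \<Rightarrow> 'v \<Rightarrow> bool) \<Rightarrow> 'v set set" where
  "inscribed V E = {K. maximal_clique V E K \<and> card K \<noteq> 2}"

definition multisun :: "'v set \<Rightarrow> ('v \<Rightarrow> 'v \<Rightarrow> bool) \<Rightarrow> (nat \<Rightarrow> 'v) \<Rightarrow> bool" where
  "multisun V E c \<longleftrightarrow> graph V E \<and> no_induced_diamond V E \<and> odd (card V) \<and>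
     hamiltonian_rim V E c \<and>
     (\<forall>K \<in> inscribed V E. \<forall>x\<in>K. \<forall>y\<in>K. x \<noteq> y \<longrightarrow> \<not> consecutive V c x y)"

definition delete_cliques :: "('v \<Rightarrow> 'v \<Rightarrow> bool) \<Rightarrow> 'v set set \<Rightarrow> 'v \<Rightarrow> 'v \<Rightarrow> bool" where
  "delete_cliques E S = (\<lambda>x y. E x y \<and> \<not> (\<exists>K\<in>S. x \<in> K \<and> y \<in> K))"

text \<open>The subpath of the rim starting at position i with k+1 vertices
  c i, c ((i+1) mod n), ..., c ((i+k) mod n), with 1 <= k < n, whose internal
  vertices lie in no inscribed clique.\<close>

definition rim_path :: "'v set \<Rightarrow> ('v \<Rightarrow> 'v \<Rightarrow> bool) \<Rightarrow> (nat \<Rightarrow> 'v) \<Rightarrow> nat \<Rightarrow> nat \<Rightarrow> bool" where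
  "rim_path V E c i k \<longleftrightarrow> i < card V \<and> 1 \<le> k \<and> k < card V \<and>
     (\<forall>j. 0 < j \<and> j < k \<longrightarrow> c ((i + j) mod card V) \<notin> \<Union> (inscribed V E))"

definition path_end :: "'v set \<Rightarrow> (nat \<Rightarrow> 'v) \<Rightarrow> nat \<Rightarrow> nat \<Rightarrow> 'v" where
  "path_end V c i k = c ((i + k) mod card V)"

definition AB_path :: "'v set \<Rightarrow> ('v \<Rightarrow> 'v \<Rightarrow> bool) \<Rightarrow> (nat \<Rightarrow> 'v) \<Rightarrow> 'v set \<Rightarrow> 'v set
    \<Rightarrow> nat \<Rightarrow> nat \<Rightarrow> bool" where
  "AB_path V E c A B i k \<longleftrightarrow> rim_path V E c i k \<and>
     ((c i \<in> A \<and> path_end V c i k \<in> B) \<or> (c i \<in> B \<and> path_end V c i k \<in> A))"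

definition Av_path :: "'v set \<Rightarrow> ('v \<Rightarrow> 'v \<Rightarrow> bool) \<Rightarrow> (nat \<Rightarrow> 'v) \<Rightarrow> 'v set \<Rightarrow> 'v
    \<Rightarrow> nat \<Rightarrow> nat \<Rightarrow> bool" where
  "Av_path V E c A v i k \<longleftrightarrow> (\<exists>B \<in> inscribed V E. v \<in> B \<and> rim_path V E c i k \<and>
     ((c i \<in> A \<and> path_end V c i k = v) \<or> (c i = v \<and> path_end V c i k \<in> A)))"

definition N1 :: "'v set \<Rightarrow> ('v \<Rightarrow> 'v \<Rightarrow> bool) \<Rightarrow> (nat \<Rightarrow> 'v) \<Rightarrow> bool" where
  "N1 V E c \<longleftrightarrow> (\<forall>A \<in> inscribed V E. \<forall>i k. AB_path V E c A A i k \<longrightarrow> even (k + 1) \<and> k + 1 \<ge> 4)"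

definition N2 :: "'v set \<Rightarrow> ('v \<Rightarrow> 'v \<Rightarrow> bool) \<Rightarrow> bool" where
  "N2 V E \<longleftrightarrow> (\<forall>A \<in> inscribed V E. odd (card A))"

definition N3 :: "'v set \<Rightarrow> ('v \<Rightarrow> 'v \<Rightarrow> bool) \<Rightarrow> 'v \<Rightarrow> bool" where
  "N3 V E \<xi> \<longleftrightarrow> \<xi> \<in> V \<and> (\<forall>A \<in> inscribed V E. \<xi> \<in> A) \<and>
     (\<forall>A \<in> inscribed V E. \<forall>B \<in> inscribed V E. A \<noteq> B \<longrightarrow> A \<inter> B = {\<xi>})"

definition N4 :: "'v set \<Rightarrow> ('v \<Rightarrow> 'v \<Rightarrow> bool) \<Rightarrow> (nat \<Rightarrow> 'v) \<Rightarrow> 'v \<Rightarrow> bool" where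
  "N4 V E c \<xi> \<longleftrightarrow> (\<forall>A \<in> inscribed V E. \<forall>i k. Av_path V E c A \<xi> i k \<longrightarrow> even (k + 1))"

definition N5 :: "'v set \<Rightarrow> ('v \<Rightarrow> 'v \<Rightarrow> bool) \<Rightarrow> (nat \<Rightarrow> 'v) \<Rightarrow> 'v \<Rightarrow> bool" where
  "N5 V E c \<xi> \<longleftrightarrow> (\<forall>A \<in> inscribed V E. \<forall>B \<in> inscribed V E. A \<noteq> B \<longrightarrow>
     (\<forall>i k. AB_path V E c A B i k \<and> c i \<noteq> \<xi> \<and> path_end V c i k \<noteq> \<xi> \<longrightarrow> odd (k + 1)))"

definition N_conditions :: "'v set \<Rightarrow> ('v \<Rightarrow> 'v \<Rightarrow> bool) \<Rightarrow> (nat \<Rightarrow> 'v) \<Rightarrow> bool" where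
  "N_conditions V E c \<longleftrightarrow> N1 V E c \<and> N2 V E \<and>
     (\<exists>\<xi>. N3 V E \<xi> \<and> N4 V E c \<xi> \<and> N5 V E c \<xi>)"

definition sunoid :: "'v set \<Rightarrow> ('v \<Rightarrow> 'v \<Rightarrow> bool) \<Rightarrow> (nat \<Rightarrow> 'v) \<Rightarrow> bool" where
  "sunoid V E c \<longleftrightarrow> multisun V E c \<and> N_conditions V E c \<and>
     (\<forall>S. S \<subset> inscribed V E \<longrightarrow> N_conditions V (delete_cliques E S) c)"

text \<open>Letters: the distinguished letter epsilon, sigma, and proper letters.
  The proper letter specific to the inscribed clique X is Prp X.\<close>

datatype 'a letter = Emp | Sig | Prp 'a

definition proper :: "'a letter \<Rightarrow> bool" where
  "proper x \<longleftrightarrow> (\<exists>X. x = Prp X)"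

fun pat :: "'a letter list \<Rightarrow> 'a letter list" where
  "pat [] = []"
| "pat (Emp # Emp # xs) = pat xs"
| "pat (x # xs) = x # pat xs"

definition cyc_equiv :: "'a list \<Rightarrow> 'a list \<Rightarrow> bool" where
  "cyc_equiv v w \<longleftrightarrow> (\<exists>k. v = rotate k w \<or> v = rev (rotate k w))"

definition approx :: "'a letter list \<Rightarrow> 'a letter list \<Rightarrow> bool" where
  "approx u v \<longleftrightarrow> cyc_equiv (pat u) (pat v)"

definition word_class :: "'a letter list \<Rightarrow> 'a letter list set" where
  "word_class w = {u. approx u w}"

definition label :: "'v set \<Rightarrow> ('v \<Rightarrow> 'v \<Rightarrow> bool) \<Rightarrow> 'v \<Rightarrow> 'v set letter" where
  "label V E v =
     (if card {K \<in> inscribed V E. v \<in> K} \<ge> 2 then Sig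
      else if (\<exists>K \<in> inscribed V E. v \<in> K) then Prp (THE K. K \<in> inscribed V E \<and> v \<in> K)
      else Emp)"

definition rim_word :: "'v set \<Rightarrow> ('v \<Rightarrow> 'v \<Rightarrow> bool) \<Rightarrow> (nat \<Rightarrow> 'v) \<Rightarrow> 'v set letter list" where
  "rim_word V E c = map (\<lambda>i. label V E (c i)) [0..<card V]"

definition sunword :: "'v set letter list set \<Rightarrow> bool" where
  "sunword W \<longleftrightarrow> (\<exists>V E c. sunoid V E c \<and> W = word_class (rim_word V E c))"

definition alphabet :: "'a letter list set \<Rightarrow> 'a letter set" where
  "alphabet W = \<Union> (set ` W)"

fun expand :: "'a letter list \<Rightarrow> 'a letter list" where
  "expand (x # y # xs) =
     (if x = y \<and> proper x then x # Emp # Emp # expand (y # xs) else x # expand (y # xs))"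
| "expand xs = xs"

definition cyc_dist :: "'a letter list \<Rightarrow> 'a letter \<Rightarrow> nat" where
  "cyc_dist v x = Min {min i (length v - i) | i. i < length v \<and> v ! i = x}"

text \<open>Order induced from a representative Sig # u equal to its own pattern; position 1
  of the paper is index 0 here.\<close>

definition prec_from :: "'a letter list \<Rightarrow> 'a letter \<Rightarrow> 'a letter \<Rightarrow> bool" where
  "prec_from u x y \<longleftrightarrow>
     (let v = Sig # Emp # Emp # expand u @ [Emp, Emp] in
       (x = Sig \<and> proper y \<and> y \<in> set u) \<or>
       (proper x \<and> proper y \<and> x \<in> set u \<and> y \<in> set u \<and> x \<noteq> y \<and> cyc_dist v x < cyc_dist v y))"

definition induced_prec :: "'a letter list set \<Rightarrow> 'a letter \<Rightarrow> 'a letter \<Rightarrow> bool" where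
  "induced_prec W x y \<longleftrightarrow>
     (\<exists>u. Sig # u \<in> W \<and> pat (Sig # u) = Sig # u \<and> prec_from u x y)"

definition exponents_even :: "'a list \<Rightarrow> 'a \<Rightarrow> bool" where
  "exponents_even w z \<longleftrightarrow>
     (\<forall>i j. i \<le> j \<and> j < length w \<and> (\<forall>k. i \<le> k \<and> k \<le> j \<longrightarrow> w ! k = z) \<and>
        (i = 0 \<or> w ! (i - 1) \<noteq> z) \<and> (Suc j = length w \<or> w ! Suc j \<noteq> z)
        \<longrightarrow> even (Suc j - i))"

end

theory Submission
  imports Defs
begin

text \<open>
  Reading the rim of a sunoid from the vertex \<open>\<xi>\<close> shared by all inscribed cliques, the
  conditions N1 and N5 of the sub-multisuns that keep one or two inscribed cliques fix the
  parity of every gap between consecutive occurrences of proper letters or of \<open>\<sigma>\<close>. These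
  constraints survive cyclic shifts, reversal and the deletion of \<open>\<epsilon>\<epsilon>\<close>, so they hold for
  every representative equal to its pattern. They make the occurrences of each proper letter
  alternate between odd and even positions, so that of two proper letters the first and the
  last occurrence belong to the same letter. An odd power \<open>z\<^sup>m\<close> is flanked as
  \<open>y \<epsilon> z\<^sup>m \<epsilon> y'\<close> with distinct proper \<open>y, y'\<close>, and counting parities shows that
  \<open>z\<close> occurs both before and after \<open>y\<close> or \<open>y'\<close>. Such an enclosed letter is farther from
  \<open>\<sigma>\<close> than \<open>z\<close> in the cyclic distance defining \<open>\<prec>\<close>, contradicting the maximality of \<open>z\<close>.
\<close>

lemma properD: "proper X \<Longrightarrow> X \<noteq> Emp \<and> X \<noteq> Sig"
  unfolding proper_def by auto

lemma properI: "x \<noteq> Emp \<Longrightarrow> x \<noteq> Sig \<Longrightarrow> proper x"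
  unfolding proper_def by (cases x) auto

section \<open>Parity words\<close>

text \<open>
  In the rim word read from \<open>\<xi>\<close>, a gap \<open>m\<close> between two letters is a rim path with
  \<open>length m + 2\<close> vertices.
\<close>

definition parity_word :: "'a letter list \<Rightarrow> bool" where
  "parity_word w \<longleftrightarrow> (\<exists>t. w = Sig # t \<and> Sig \<notin> set t) \<and> odd (length w) \<and>
   (\<forall>X m s. proper X \<longrightarrow> w = Sig # m @ X # s \<longrightarrow> X \<notin> set m \<longrightarrow> even (length m)) \<and>
   (\<forall>X p m s. proper X \<longrightarrow> w = p @ X # m @ X # s \<longrightarrow> X \<notin> set m \<longrightarrow> even (length m)) \<and>
   (\<forall>X p m. proper X \<longrightarrow> w = p @ X # m \<longrightarrow> X \<notin> set m \<longrightarrow> even (length m)) \<and>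
   (\<forall>X Y p m s. proper X \<longrightarrow> proper Y \<longrightarrow> X \<noteq> Y \<longrightarrow> w = p @ X # m @ Y # s \<longrightarrow>
      X \<notin> set m \<longrightarrow> Y \<notin> set m \<longrightarrow> odd (length m))"

lemma parity_word_Sig_head: "parity_word w \<Longrightarrow> \<exists>t. w = Sig # t \<and> Sig \<notin> set t"
  unfolding parity_word_def by blast

lemma parity_word_odd_length: "parity_word w \<Longrightarrow> odd (length w)"
  unfolding parity_word_def by blast

lemma parity_word_head_gap:
  "parity_word w \<Longrightarrow> proper X \<Longrightarrow> w = Sig # m @ X # s \<Longrightarrow> X \<notin> set m \<Longrightarrow> even (length m)"
  unfolding parity_word_def by blast

lemma parity_word_same_gap:
  "parity_word w \<Longrightarrow> proper X \<Longrightarrow> w = p @ X # m @ X # s \<Longrightarrow> X \<notin> set m \<Longrightarrow> even (length m)"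
  unfolding parity_word_def by blast

lemma parity_word_tail_gap:
  "parity_word w \<Longrightarrow> proper X \<Longrightarrow> w = p @ X # m \<Longrightarrow> X \<notin> set m \<Longrightarrow> even (length m)"
  unfolding parity_word_def by blast

lemma parity_word_distinct_gap:
  "parity_word w \<Longrightarrow> proper X \<Longrightarrow> proper Y \<Longrightarrow> X \<noteq> Y \<Longrightarrow> w = p @ X # m @ Y # s \<Longrightarrow>
    X \<notin> set m \<Longrightarrow> Y \<notin> set m \<Longrightarrow> odd (length m)"
  unfolding parity_word_def by blast

lemma Sig_Cons_eq_append_proper:
  assumes "Sig # t = p @ X # q" "proper X"
  shows "\<exists>p'. p = Sig # p' \<and> t = p' @ X # q"
  using assms properD[OF assms(2)] by (cases p) auto

lemma parity_word_rev:
  assumes P: "parity_word (Sig # t)"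
  shows "parity_word (Sig # rev t)"
  unfolding parity_word_def
proof (intro conjI allI impI)
  show "\<exists>t'. Sig # rev t = Sig # t' \<and> Sig \<notin> set t'"
    using parity_word_Sig_head[OF P] by auto
  show "odd (length (Sig # rev t))"
    using parity_word_odd_length[OF P] by simp
next
  fix X m s assume "proper X" "Sig # rev t = Sig # m @ X # s" "X \<notin> set m"
  then have "Sig # t = (Sig # rev s) @ X # rev m" "X \<notin> set (rev m)"
    by (auto simp: rev_swap)
  then show "even (length m)"
    using parity_word_tail_gap[OF P \<open>proper X\<close>] by fastforce
next
  fix X p m s assume X: "proper X" and w: "Sig # rev t = p @ X # m @ X # s" and "X \<notin> set m"
  obtain p' where "rev t = p' @ X # m @ X # s"
    using Sig_Cons_eq_append_proper[OF w X] by blast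
  then have "Sig # t = (Sig # rev s) @ X # rev m @ X # rev p'"
    by (simp add: rev_swap)
  then show "even (length m)"
    using parity_word_same_gap[OF P X] \<open>X \<notin> set m\<close> by fastforce
next
  fix X p m assume X: "proper X" and w: "Sig # rev t = p @ X # m" and "X \<notin> set m"
  obtain p' where "rev t = p' @ X # m"
    using Sig_Cons_eq_append_proper[OF w X] by blast
  then have "Sig # t = Sig # rev m @ X # rev p'"
    by (simp add: rev_swap)
  then show "even (length m)"
    using parity_word_head_gap[OF P X] \<open>X \<notin> set m\<close> by fastforce
next
  fix X Y p m s assume X: "proper X" and Y: "proper Y" and "X \<noteq> Y"
    and w: "Sig # rev t = p @ X # m @ Y # s" and "X \<notin> set m" "Y \<notin> set m"
  obtain p' where "rev t = p' @ X # m @ Y # s"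
    using Sig_Cons_eq_append_proper[OF w X] by blast
  then have "Sig # t = (Sig # rev s) @ Y # rev m @ X # rev p'"
    by (simp add: rev_swap)
  then show "odd (length m)"
    using parity_word_distinct_gap[OF P Y X] \<open>X \<noteq> Y\<close> \<open>X \<notin> set m\<close> \<open>Y \<notin> set m\<close> by fastforce
qed

lemma nth_append_Cons_between:
  assumes "length p < j" "j \<le> length p + length m"
  shows "(p @ x # m @ q) ! j \<in> set m"
proof -
  have "j - Suc (length p) < length m"
    using assms by linarith
  then have "(p @ x # m @ q) ! j = m ! (j - Suc (length p))"
    using assms by (simp add: nth_append nth_Cons')
  then show ?thesis
    using assms by simp
qed

text \<open>Index \<open>length w\<close> of \<open>w @ [Sig]\<close> is the initial \<open>\<sigma>\<close> reached again around the cycle.\<close>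

lemma parity_wordI:
  assumes head: "w ! 0 = Sig" and tail: "\<And>j. 0 < j \<Longrightarrow> j < length w \<Longrightarrow> w ! j \<noteq> Sig"
    and odd: "odd (length w)"
    and same: "\<And>X j1 j2. proper X \<Longrightarrow> j1 < j2 \<Longrightarrow> j2 \<le> length w \<Longrightarrow> j2 - j1 < length w \<Longrightarrow>
      (w @ [Sig]) ! j1 \<in> {Sig, X} \<Longrightarrow> (w @ [Sig]) ! j2 \<in> {Sig, X} \<Longrightarrow>
      (\<And>j. j1 < j \<Longrightarrow> j < j2 \<Longrightarrow> w ! j \<noteq> X) \<Longrightarrow> even (j2 - j1 + 1)"
    and distinct: "\<And>X Y j1 j2. proper X \<Longrightarrow> proper Y \<Longrightarrow> X \<noteq> Y \<Longrightarrow> j1 < j2 \<Longrightarrow> j2 < length w \<Longrightarrow>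
      w ! j1 = X \<Longrightarrow> w ! j2 = Y \<Longrightarrow> (\<And>j. j1 < j \<Longrightarrow> j < j2 \<Longrightarrow> w ! j \<notin> {X, Y}) \<Longrightarrow>
      odd (j2 - j1 + 1)"
  shows "parity_word w"
  unfolding parity_word_def
proof (intro conjI allI impI)
  have "w \<noteq> []"
    using odd by auto
  then have "w = Sig # tl w"
    using head by (cases w) auto
  moreover have "Sig \<notin> set (tl w)"
    using tail by (auto simp: in_set_conv_nth nth_tl)
  ultimately show "\<exists>t. w = Sig # t \<and> Sig \<notin> set t"
    by blast
  show "odd (length w)"
    by (rule odd)
next
  fix X m s assume X: "proper X" and w: "w = Sig # m @ X # s" and "X \<notin> set m"
  have "even (Suc (length m) - 0 + 1)"
  proof (rule same[OF X])
    fix j assume "0 < j" "j < Suc (length m)"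
    then show "w ! j \<noteq> X"
      using nth_append_Cons_between[of "[]" j m Sig "X # s"] w \<open>X \<notin> set m\<close> by auto
  qed (use w in \<open>auto simp: nth_append\<close>)
  then show "even (length m)"
    by simp
next
  fix X p m s assume X: "proper X" and w: "w = p @ X # m @ X # s" and "X \<notin> set m"
  have "even (length p + length m + 1 - length p + 1)"
  proof (rule same[OF X])
    fix j assume "length p < j" "j < length p + length m + 1"
    then show "w ! j \<noteq> X"
      using nth_append_Cons_between[of p j m X "X # s"] w \<open>X \<notin> set m\<close> by auto
  qed (use w in \<open>auto simp: nth_append\<close>)
  then show "even (length m)"
    by simp
next
  fix X p m assume X: "proper X" and w: "w = p @ X # m" and "X \<notin> set m"
  have "p \<noteq> []"
    using head w properD[OF X] by (cases p) auto
  have "even (length w - length p + 1)"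
  proof (rule same[OF X])
    fix j assume "length p < j" "j < length w"
    then show "w ! j \<noteq> X"
      using nth_append_Cons_between[of p j m X "[]"] w \<open>X \<notin> set m\<close> by auto
  qed (use w \<open>p \<noteq> []\<close> in \<open>auto simp: nth_append\<close>)
  then show "even (length m)"
    using w by simp
next
  fix X Y p m s assume X: "proper X" and Y: "proper Y" and "X \<noteq> Y"
    and w: "w = p @ X # m @ Y # s" and "X \<notin> set m" "Y \<notin> set m"
  have "odd (length p + length m + 1 - length p + 1)"
  proof (rule distinct[OF X Y \<open>X \<noteq> Y\<close>])
    fix j assume "length p < j" "j < length p + length m + 1"
    then show "w ! j \<notin> {X, Y}"
      using nth_append_Cons_between[of p j m X "Y # s"] w \<open>X \<notin> set m\<close> \<open>Y \<notin> set m\<close> by auto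
  qed (use w in \<open>auto simp: nth_append\<close>)
  then show "odd (length m)"
    by simp
qed

definition ins_EE :: "'a letter list \<Rightarrow> 'a letter list \<Rightarrow> bool" where
  "ins_EE l l' \<longleftrightarrow> (\<exists>\<alpha> \<beta>. l = \<alpha> @ \<beta> \<and> l' = \<alpha> @ Emp # Emp # \<beta>)"

lemma ins_EE_set: "ins_EE l l' \<Longrightarrow> set l' \<subseteq> insert Emp (set l)"
  unfolding ins_EE_def by auto

lemma ins_EE_length: "ins_EE l l' \<Longrightarrow> length l' = length l + 2"
  unfolding ins_EE_def by auto

lemma ins_EE_split:
  assumes "ins_EE (p @ X # q) l'" "X \<noteq> Emp"
  shows "(\<exists>p'. ins_EE p p' \<and> l' = p' @ X # q) \<or> (\<exists>q'. ins_EE q q' \<and> l' = p @ X # q')"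
proof -
  obtain \<alpha> \<beta> where ab: "p @ X # q = \<alpha> @ \<beta>" "l' = \<alpha> @ Emp # Emp # \<beta>"
    using assms(1) unfolding ins_EE_def by blast
  from ab(1) obtain us where "p = \<alpha> @ us \<and> us @ X # q = \<beta> \<or> p @ us = \<alpha> \<and> X # q = us @ \<beta>"
    by (auto simp: append_eq_append_conv2)
  then show ?thesis
  proof
    assume "p = \<alpha> @ us \<and> us @ X # q = \<beta>"
    then have "ins_EE p (\<alpha> @ Emp # Emp # us) \<and> l' = (\<alpha> @ Emp # Emp # us) @ X # q"
      using ab unfolding ins_EE_def by auto
    then show ?thesis by blast
  next
    assume h: "p @ us = \<alpha> \<and> X # q = us @ \<beta>"
    show ?thesis
    proof (cases us)
      case Nil
      then have "ins_EE p (p @ [Emp, Emp]) \<and> l' = (p @ [Emp, Emp]) @ X # q"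
        using h ab unfolding ins_EE_def by force
      then show ?thesis by blast
    next
      case (Cons u us')
      then have "ins_EE q (us' @ Emp # Emp # \<beta>) \<and> l' = p @ X # (us' @ Emp # Emp # \<beta>)"
        using h ab unfolding ins_EE_def by auto
      then show ?thesis by blast
    qed
  qed
qed

lemma ins_EE_lift_gap:
  assumes "ins_EE (p @ X # m) w'" "X \<noteq> Emp"
  shows "\<exists>p' m'. w' = p' @ X # m' \<and> (m' = m \<or> ins_EE m m')"
  using ins_EE_split[OF assms] by blast

lemma ins_EE_lift_two_letter_gap:
  assumes "ins_EE (p @ X # m @ Y # s) w'" "X \<noteq> Emp" "Y \<noteq> Emp"
  shows "\<exists>p' m' s'. w' = p' @ X # m' @ Y # s' \<and> (m' = m \<or> ins_EE m m')"
proof -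
  from ins_EE_split[OF assms(1,2)] consider
      p' where "w' = p' @ X # m @ Y # s"
    | q' where "ins_EE (m @ Y # s) q'" "w' = p @ X # q'"
    by blast
  then show ?thesis
  proof cases
    case 2
    from ins_EE_split[OF 2(1) assms(3)] show ?thesis
      using 2(2) by blast
  qed blast
qed

lemma ins_EE_gap_parity:
  assumes "m' = m \<or> ins_EE m m'" "X \<noteq> Emp" "X \<notin> set m"
  shows "X \<notin> set m'" "even (length m') \<longleftrightarrow> even (length m)"
  using assms ins_EE_set ins_EE_length by fastforce+

lemma parity_word_delete_EE:
  assumes ins: "ins_EE w w'" and P: "parity_word w'"
  shows "parity_word w"
  unfolding parity_word_def
proof (intro conjI allI impI)
  obtain \<alpha> \<beta> where ab: "w = \<alpha> @ \<beta>" "w' = \<alpha> @ Emp # Emp # \<beta>"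
    using ins unfolding ins_EE_def by blast
  obtain t' where t': "w' = Sig # t'" "Sig \<notin> set t'"
    using parity_word_Sig_head[OF P] by blast
  then obtain \<alpha>0 where "\<alpha> = Sig # \<alpha>0"
    using ab by (cases \<alpha>) auto
  then show "\<exists>t. w = Sig # t \<and> Sig \<notin> set t"
    using ab t' by auto
  show "odd (length w)"
    using parity_word_odd_length[OF P] ins_EE_length[OF ins] by simp
next
  fix X m s assume X: "proper X" and w: "w = Sig # m @ X # s" and "X \<notin> set m"
  obtain p' m' s' where w': "w' = p' @ Sig # m' @ X # s'" and m': "m' = m \<or> ins_EE m m'"
    using ins_EE_lift_two_letter_gap[of "[]" Sig m X s w'] ins w properD[OF X] by auto
  have "p' = []"
    using parity_word_Sig_head[OF P] w' by (cases p') auto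
  then show "even (length m)"
    using parity_word_head_gap[OF P X] w' ins_EE_gap_parity[OF m'] properD[OF X] \<open>X \<notin> set m\<close>
    by auto
next
  fix X p m s assume X: "proper X" and w: "w = p @ X # m @ X # s" and "X \<notin> set m"
  obtain p' m' s' where "w' = p' @ X # m' @ X # s'" and m': "m' = m \<or> ins_EE m m'"
    using ins_EE_lift_two_letter_gap[OF ins[unfolded w]] properD[OF X] by blast
  then show "even (length m)"
    using parity_word_same_gap[OF P X] ins_EE_gap_parity[OF m'] properD[OF X] \<open>X \<notin> set m\<close>
    by blast
next
  fix X p m assume X: "proper X" and w: "w = p @ X # m" and "X \<notin> set m"
  obtain p' m' where "w' = p' @ X # m'" and m': "m' = m \<or> ins_EE m m'"
    using ins_EE_lift_gap[OF ins[unfolded w]] properD[OF X] by blast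
  then show "even (length m)"
    using parity_word_tail_gap[OF P X] ins_EE_gap_parity[OF m'] properD[OF X] \<open>X \<notin> set m\<close>
    by blast
next
  fix X Y p m s assume X: "proper X" and Y: "proper Y" and "X \<noteq> Y"
    and w: "w = p @ X # m @ Y # s" and "X \<notin> set m" "Y \<notin> set m"
  obtain p' m' s' where "w' = p' @ X # m' @ Y # s'" and m': "m' = m \<or> ins_EE m m'"
    using ins_EE_lift_two_letter_gap[OF ins[unfolded w]] properD[OF X] properD[OF Y] by blast
  then show "odd (length m)"
    using parity_word_distinct_gap[OF P X Y \<open>X \<noteq> Y\<close>] ins_EE_gap_parity[OF m']
      properD[OF X] properD[OF Y] \<open>X \<notin> set m\<close> \<open>Y \<notin> set m\<close> by blast
qed

section \<open>Cyclic parity words\<close>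

definition cyclic_parity_word :: "'a letter list \<Rightarrow> bool" where
  "cyclic_parity_word x \<longleftrightarrow> (\<forall>s t. x = s @ Sig # t \<longrightarrow> parity_word (Sig # t @ s))"

lemma cyclic_parity_wordD:
  "cyclic_parity_word (s @ Sig # t) \<Longrightarrow> parity_word (Sig # t @ s)"
  unfolding cyclic_parity_word_def by blast

lemma cyclic_parity_word_rotate1:
  assumes "cyclic_parity_word x"
  shows "cyclic_parity_word (rotate1 x)"
  unfolding cyclic_parity_word_def
proof (intro allI impI)
  fix s t assume r: "rotate1 x = s @ Sig # t"
  then obtain b xs where x: "x = b # xs" and "xs @ [b] = s @ Sig # t"
    by (cases x) auto
  then consider "b = Sig" "t = []" "xs = s" | t' where "t = t' @ [b]" "xs = s @ Sig # t'"
    by (cases t rule: rev_exhaust) auto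
  then show "parity_word (Sig # t @ s)"
  proof cases
    case 1
    then show ?thesis using cyclic_parity_wordD[of "[]" s] assms x by simp
  next
    case 2
    then show ?thesis using cyclic_parity_wordD[of "b # s" t'] assms x by simp
  qed
qed

lemma cyclic_parity_word_rotate: "cyclic_parity_word x \<Longrightarrow> cyclic_parity_word (rotate k x)"
  by (induction k) (simp_all add: cyclic_parity_word_rotate1)

lemma cyclic_parity_word_rev:
  assumes "cyclic_parity_word x"
  shows "cyclic_parity_word (rev x)"
  unfolding cyclic_parity_word_def
proof (intro allI impI)
  fix s t assume "rev x = s @ Sig # t"
  then have "x = rev t @ Sig # rev s"
    by (simp add: rev_swap)
  then have "parity_word (Sig # rev (t @ s))"
    using cyclic_parity_wordD assms by fastforce
  then show "parity_word (Sig # t @ s)"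
    using parity_word_rev by fastforce
qed

lemma cyclic_parity_word_delete_EE:
  assumes "cyclic_parity_word (a @ Emp # Emp # b)"
  shows "cyclic_parity_word (a @ b)"
  unfolding cyclic_parity_word_def
proof (intro allI impI)
  fix s t assume "a @ b = s @ Sig # t"
  then consider b1 where "s = a @ b1" "b = b1 @ Sig # t" | a2 where "a = s @ Sig # a2" "t = a2 @ b"
    by (auto simp: append_eq_append_conv2 append_eq_Cons_conv)
  then show "parity_word (Sig # t @ s)"
  proof cases
    case 1
    then have "parity_word (Sig # t @ a @ Emp # Emp # b1)"
      using cyclic_parity_wordD[of "a @ Emp # Emp # b1" t] assms by simp
    moreover have "ins_EE (Sig # t @ s) (Sig # t @ a @ Emp # Emp # b1)"
      unfolding ins_EE_def using 1 by (metis append_Cons append_assoc)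
    ultimately show ?thesis
      using parity_word_delete_EE by blast
  next
    case 2
    then have "parity_word (Sig # (a2 @ Emp # Emp # b) @ s)"
      using cyclic_parity_wordD[of s "a2 @ Emp # Emp # b"] assms by simp
    moreover have "ins_EE (Sig # t @ s) (Sig # (a2 @ Emp # Emp # b) @ s)"
      unfolding ins_EE_def using 2 by (metis append_Cons append_assoc)
    ultimately show ?thesis
      using parity_word_delete_EE by blast
  qed
qed

lemma cyclic_parity_word_pat_append:
  "cyclic_parity_word (a @ xs) \<Longrightarrow> cyclic_parity_word (a @ pat xs)"
proof (induction xs arbitrary: a rule: pat.induct)
  case (2 xs)
  then show ?case
    using cyclic_parity_word_delete_EE by fastforce
qed (metis append.assoc append_Cons append_Nil pat.simps)+

lemma cyclic_parity_word_pat: "cyclic_parity_word x \<Longrightarrow> cyclic_parity_word (pat x)"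
  using cyclic_parity_word_pat_append[of "[]"] by simp

section \<open>Occurrences of proper letters and odd runs\<close>

lemma parity_word_prefix_count:
  assumes P: "parity_word w" and X: "proper X"
  shows "w = p @ X # s \<Longrightarrow> odd (length p) \<longleftrightarrow> even (count_list p X)"
proof (induction p arbitrary: s rule: length_induct)
  case (1 p)
  show ?case
  proof (cases "X \<in> set p")
    case False
    obtain t where "w = Sig # t"
      using parity_word_Sig_head[OF P] by blast
    then obtain p' where p': "p = Sig # p'" "w = Sig # p' @ X # s"
      using Sig_Cons_eq_append_proper[OF _ X, of t p s] "1.prems" by auto
    then have "even (length p')"
      using parity_word_head_gap[OF P X] False by simp
    then show ?thesis
      using p' False properD[OF X] by auto
  next
    case True
    obtain p1 m where pm: "p = p1 @ X # m" "X \<notin> set m"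
      using split_list_last[OF True] by blast
    have "even (length m)"
      using parity_word_same_gap[OF P X, of p1 m s] "1.prems" pm by simp
    moreover have "odd (length p1) \<longleftrightarrow> even (count_list p1 X)"
      using "1.IH" "1.prems" pm by simp
    ultimately show ?thesis
      using pm by simp
  qed
qed

lemma parity_word_even_count:
  assumes P: "parity_word w" and X: "proper X"
  shows "even (count_list w X)"
proof (cases "X \<in> set w")
  case True
  obtain p m where pm: "w = p @ X # m" "X \<notin> set m"
    using split_list_last[OF True] by blast
  have "even (length m)" "odd (length w)"
    using parity_word_tail_gap[OF P X pm] parity_word_odd_length[OF P] .
  then have "even (length p)"
    using pm by simp
  then show ?thesis
    using parity_word_prefix_count[OF P X pm(1)] pm by simp
qed simp

lemma parity_word_first_of_pair:
  assumes P: "parity_word w"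
  shows "proper L \<Longrightarrow> proper M \<Longrightarrow> L \<noteq> M \<Longrightarrow> w = p @ L # s \<Longrightarrow>
    hd (filter (\<lambda>c. c \<in> {L, M}) w) = M \<longleftrightarrow> odd (count_list p M)"
proof (induction p arbitrary: s L M rule: length_induct)
  case (1 p)
  note L = "1.prems"(1) and M = "1.prems"(2) and LM = "1.prems"(3) and w = "1.prems"(4)
  show ?case
  proof (cases "M \<in> set p")
    case False
    have "hd (filter (\<lambda>c. c \<in> {L, M}) w) = L"
    proof (cases "filter (\<lambda>c. c \<in> {L, M}) p")
      case (Cons f fs)
      then have "f \<in> set (filter (\<lambda>c. c \<in> {L, M}) p)"
        by simp
      then show ?thesis
        using w Cons False by auto
    qed (simp add: w)
    then show ?thesis
      using False LM by simp
  next
    case True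
    obtain p1 m where pm: "p = p1 @ M # m" "M \<notin> set m"
      using split_list_last[OF True] by blast
    obtain m1 m2 where mm: "m @ L # s = m1 @ L # m2" "L \<notin> set m1" "set m1 \<subseteq> set m"
    proof (cases "L \<in> set m")
      case True
      then obtain m1 m2 where "m = m1 @ L # m2" "L \<notin> set m1"
        using split_list_first by metis
      then show ?thesis
        using that[of m1 "m2 @ L # s"] by auto
    qed auto
    have w1: "w = p1 @ M # m1 @ L # m2"
      using w pm mm by simp
    have "odd (length m1)"
      using parity_word_distinct_gap[OF P M L LM[symmetric] w1] pm mm by blast
    moreover have "odd (length p1) \<longleftrightarrow> even (count_list p1 M)"
      using parity_word_prefix_count[OF P M] w1 by simp
    moreover have "odd (length (p1 @ M # m1)) \<longleftrightarrow> even (count_list p1 L)"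
      using parity_word_prefix_count[OF P L, of "p1 @ M # m1" m2] w1 mm LM by simp
    moreover have "hd (filter (\<lambda>c. c \<in> {M, L}) w) = L \<longleftrightarrow> odd (count_list p1 L)"
      using "1.IH"[rule_format, of p1 M L "m1 @ L # m2"] pm w1 M L LM by simp
    moreover have "hd (filter (\<lambda>c. c \<in> {L, M}) w) \<in> {L, M}"
      using w hd_in_set[of "filter (\<lambda>c. c \<in> {L, M}) w"] by force
    ultimately show ?thesis
      using pm LM by (auto simp: insert_commute)
  qed
qed

lemma parity_word_first_eq_last_of_pair:
  assumes P: "parity_word w" and X: "proper X" and Y: "proper Y" and XY: "X \<noteq> Y"
    and ex: "X \<in> set w"
  shows "last (filter (\<lambda>c. c \<in> {X, Y}) w) = hd (filter (\<lambda>c. c \<in> {X, Y}) w)"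
proof -
  have "\<exists>x\<in>set w. x \<in> {X, Y}"
    using ex by blast
  then obtain p L s where pLs: "w = p @ L # s" "L \<in> {X, Y}" "\<forall>x\<in>set s. x \<notin> {X, Y}"
    using split_list_last_prop[of w "\<lambda>c. c \<in> {X, Y}"] by blast
  define M where "M = (if L = X then Y else X)"
  have LM: "L \<noteq> M" "{L, M} = {X, Y}" "proper L" "proper M"
    using pLs(2) XY X Y unfolding M_def by auto
  have "M \<notin> set s"
    using pLs(3) LM(2) by blast
  then have "count_list w M = count_list p M"
    using pLs(1) LM(1) by simp
  then have "hd (filter (\<lambda>c. c \<in> {L, M}) w) \<noteq> M"
    using parity_word_first_of_pair[OF P LM(3,4,1) pLs(1)] parity_word_even_count[OF P LM(4)]
    by simp
  moreover have "filter (\<lambda>c. c \<in> {L, M}) w \<noteq> []"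
    using pLs(1) by simp
  then have "hd (filter (\<lambda>c. c \<in> {L, M}) w) \<in> {L, M}"
    using hd_in_set by fastforce
  moreover have "filter (\<lambda>c. c \<in> {L, M}) s = []"
    using pLs(3) LM(2) by (simp add: filter_empty_conv)
  then have "last (filter (\<lambda>c. c \<in> {L, M}) w) = L"
    using pLs(1) by simp
  ultimately show ?thesis
    unfolding LM(2)[symmetric] by auto
qed

lemma parity_word_Sig_position:
  "parity_word w \<Longrightarrow> w = p @ Sig # q \<Longrightarrow> p = []"
  using parity_word_Sig_head by (cases p) fastforce+

lemma length_pat_le: "length (pat xs) \<le> length xs"
  by (induction xs rule: pat.induct) auto

lemma length_pat_less: "xs = p @ Emp # Emp # q \<Longrightarrow> length (pat xs) < length xs"
proof (induction xs arbitrary: p rule: pat.induct)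
  case (2 xs)
  show ?case using length_pat_le[of xs] by simp
qed (fastforce simp: Cons_eq_append_conv)+

lemma pat_fixed_no_EE: "pat xs = xs \<Longrightarrow> xs \<noteq> p @ Emp # Emp # q"
  using length_pat_less by fastforce

lemma not_exponents_even_odd_run:
  assumes "\<not> exponents_even w z"
  shows "\<exists>\<alpha> m \<beta>. w = \<alpha> @ replicate m z @ \<beta> \<and> odd m \<and>
    (\<alpha> \<noteq> [] \<longrightarrow> last \<alpha> \<noteq> z) \<and> (\<beta> \<noteq> [] \<longrightarrow> hd \<beta> \<noteq> z)"
proof -
  obtain i j where ij: "i \<le> j" "j < length w" "\<forall>k. i \<le> k \<and> k \<le> j \<longrightarrow> w ! k = z"
    "i = 0 \<or> w ! (i - 1) \<noteq> z" "Suc j = length w \<or> w ! Suc j \<noteq> z" "odd (Suc j - i)"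
    using assms unfolding exponents_even_def by blast
  have "take (Suc j - i) (drop i w) = replicate (Suc j - i) z"
    by (rule nth_equalityI) (use ij in auto)
  then have "w = take i w @ replicate (Suc j - i) z @ drop (Suc j) w"
    using ij(1) by (metis append_take_drop_id Suc_diff_le drop_drop le_SucI le_add_diff_inverse2)
  moreover have "take i w \<noteq> [] \<longrightarrow> last (take i w) \<noteq> z"
    using ij by (auto simp: last_conv_nth)
  moreover have "drop (Suc j) w \<noteq> [] \<longrightarrow> hd (drop (Suc j) w) \<noteq> z"
    using ij by (auto simp: hd_drop_conv_nth)
  ultimately show ?thesis
    using ij(6) by blast
qed

lemma odd_run_left_flank:
  assumes P: "parity_word w" and noEE: "\<And>p q. w \<noteq> p @ Emp # Emp # q" and z: "proper z"
    and w: "w = \<alpha> @ z # \<gamma>" and last: "\<alpha> \<noteq> [] \<longrightarrow> last \<alpha> \<noteq> z"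
    and "\<alpha> \<noteq> [Sig]" "\<alpha> \<noteq> [Sig, Emp]"
  shows "\<exists>\<alpha>1 y. \<alpha> = \<alpha>1 @ [y, Emp] \<and> proper y \<and> y \<noteq> z"
proof -
  have "\<alpha> \<noteq> []"
    using P w properD[OF z] parity_word_Sig_head by fastforce
  then obtain \<alpha>' l where \<alpha>: "\<alpha> = \<alpha>' @ [l]"
    by (metis rev_exhaust)
  have "l = Emp"
  proof (rule ccontr)
    assume "l \<noteq> Emp"
    moreover have "l \<noteq> Sig"
      using parity_word_Sig_position[OF P, of \<alpha>'] w \<alpha> \<open>\<alpha> \<noteq> [Sig]\<close> by auto
    moreover have "l \<noteq> z"
      using last \<alpha> by simp
    ultimately have "odd (length ([] :: 'a letter list))"
      using parity_word_distinct_gap[OF P properI z, of l \<alpha>' "[]" \<gamma>] w \<alpha> by simp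
    then show False by simp
  qed
  have "\<alpha>' \<noteq> []"
    using P w \<alpha> \<open>l = Emp\<close> parity_word_Sig_head by fastforce
  then obtain \<alpha>1 y where \<alpha>': "\<alpha>' = \<alpha>1 @ [y]"
    by (metis rev_exhaust)
  have "y \<noteq> Emp"
    using noEE[of \<alpha>1 "z # \<gamma>"] w \<alpha> \<alpha>' \<open>l = Emp\<close> by auto
  moreover have "y \<noteq> Sig"
    using parity_word_Sig_position[OF P, of \<alpha>1] w \<alpha> \<alpha>' \<open>l = Emp\<close> \<open>\<alpha> \<noteq> [Sig, Emp]\<close> by auto
  moreover have "y \<noteq> z"
    using parity_word_same_gap[OF P z, of \<alpha>1 "[Emp]" \<gamma>] w \<alpha> \<alpha>' \<open>l = Emp\<close> properD[OF z] by auto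
  ultimately show ?thesis
    using \<alpha> \<alpha>' \<open>l = Emp\<close> properI by auto
qed

lemma odd_run_right_flank:
  assumes P: "parity_word w" and noEE: "\<And>p q. w \<noteq> p @ Emp # Emp # q" and z: "proper z"
    and w: "w = \<gamma> @ z # \<beta>" and "\<beta> \<noteq> []" "hd \<beta> \<noteq> z" "last \<beta> \<noteq> Emp"
  shows "\<exists>y \<beta>1. \<beta> = Emp # y # \<beta>1 \<and> proper y \<and> y \<noteq> z"
proof -
  obtain l \<beta>' where \<beta>: "\<beta> = l # \<beta>'"
    using \<open>\<beta> \<noteq> []\<close> by (cases \<beta>) auto
  have not_Sig: "x \<noteq> Sig" if "w = p @ x # q" "p \<noteq> []" for x p q
    using parity_word_Sig_position[OF P] that by blast
  have "l = Emp"
  proof (rule ccontr)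
    assume "l \<noteq> Emp"
    then have "proper l" "l \<noteq> z"
      using properI not_Sig[of "\<gamma> @ [z]" l \<beta>'] w \<beta> \<open>hd \<beta> \<noteq> z\<close> by auto
    then have "odd (length ([] :: 'a letter list))"
      using parity_word_distinct_gap[OF P z, of l \<gamma> "[]" \<beta>'] w \<beta> by simp
    then show False by simp
  qed
  then obtain y \<beta>1 where \<beta>': "\<beta>' = y # \<beta>1"
    using \<open>last \<beta> \<noteq> Emp\<close> \<beta> by (cases \<beta>') auto
  have "y \<noteq> Emp"
    using noEE[of "\<gamma> @ [z]" \<beta>1] w \<beta> \<beta>' \<open>l = Emp\<close> by auto
  moreover have "y \<noteq> Sig"
    using not_Sig[of "\<gamma> @ [z, Emp]" y \<beta>1] w \<beta> \<beta>' \<open>l = Emp\<close> by simp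
  moreover have "y \<noteq> z"
    using parity_word_same_gap[OF P z, of \<gamma> "[Emp]" \<beta>1] w \<beta> \<beta>' \<open>l = Emp\<close> properD[OF z] by auto
  ultimately show ?thesis
    using \<beta> \<beta>' \<open>l = Emp\<close> properI by auto
qed

lemma flanked_odd_run_first_of_pair:
  assumes P: "parity_word w" and w: "w = \<alpha> @ y # Emp # replicate m z @ Emp # y' # \<beta>"
    and y: "proper y" and y': "proper y'" and z: "proper z" and "y \<noteq> z" "y' \<noteq> z" "odd m"
  shows "hd (filter (\<lambda>c. c \<in> {z, y}) w) = z \<or> hd (filter (\<lambda>c. c \<in> {z, y'}) w) = z"
proof (rule ccontr)
  assume "\<not> ?thesis"
  moreover have "filter (\<lambda>c. c \<in> {z, y}) w \<noteq> []" "filter (\<lambda>c. c \<in> {z, y'}) w \<noteq> []"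
    using w by simp_all
  ultimately have first: "hd (filter (\<lambda>c. c \<in> {z, y}) w) = y" "hd (filter (\<lambda>c. c \<in> {z, y'}) w) = y'"
    using hd_in_set by fastforce+
  have "y \<noteq> y'"
  proof
    assume "y = y'"
    then have "even (length (Emp # replicate m z @ [Emp]))"
      using parity_word_same_gap[OF P y, of \<alpha> _ \<beta>] w \<open>y \<noteq> z\<close> properD[OF y] by auto
    then show False
      using \<open>odd m\<close> by simp
  qed
  obtain m' where m: "m = Suc m'"
    using \<open>odd m\<close> odd_pos not0_implies_Suc by blast
  have "even (count_list \<alpha> y)"
    using parity_word_first_of_pair[OF P z y, of "\<alpha> @ [y, Emp]" "replicate m' z @ Emp # y' # \<beta>"]
      first w m \<open>y \<noteq> z\<close> properD[OF y] by auto
  then have "odd (length \<alpha>)"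
    using parity_word_prefix_count[OF P y, of \<alpha>] w by simp
  moreover have "odd (count_list \<alpha> y')"
    using parity_word_first_of_pair[OF P z y', of "\<alpha> @ [y, Emp] @ replicate m' z" "Emp # y' # \<beta>"]
      first w m \<open>y \<noteq> y'\<close> \<open>y' \<noteq> z\<close> properD[OF y'] by (auto simp: replicate_append_same)
  moreover have "odd (length \<alpha> + m + 3) \<longleftrightarrow> even (count_list \<alpha> y')"
    using parity_word_prefix_count[OF P y', of "\<alpha> @ [y, Emp] @ replicate m z @ [Emp]" \<beta>]
      w \<open>y \<noteq> y'\<close> \<open>y' \<noteq> z\<close> properD[OF y'] by auto
  ultimately show False
    using \<open>odd m\<close> by simp
qed

definition encloses :: "'a list \<Rightarrow> 'a \<Rightarrow> 'a \<Rightarrow> bool" where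
  "encloses w z y \<longleftrightarrow> y \<in> set w \<and>
     hd (filter (\<lambda>c. c \<in> {z, y}) w) = z \<and> last (filter (\<lambda>c. c \<in> {z, y}) w) = z"

lemma parity_word_enclosesI:
  assumes "parity_word w" "proper z" "proper y" "y \<noteq> z" "z \<in> set w" "y \<in> set w"
    and "hd (filter (\<lambda>c. c \<in> {z, y}) w) = z"
  shows "encloses w z y"
  using parity_word_first_eq_last_of_pair[of w z y] assms unfolding encloses_def by auto

lemma encloses_Cons: "x \<notin> {z, y} \<Longrightarrow> encloses (x # u) z y \<longleftrightarrow> encloses u z y"
  unfolding encloses_def by auto

lemma encloses_rev: "encloses (rev u) z y \<longleftrightarrow> encloses u z y"
proof -
  have "y \<in> set u \<Longrightarrow> filter (\<lambda>c. c \<in> {z, y}) u \<noteq> []"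
    by (auto simp: filter_empty_conv)
  then show ?thesis
    unfolding encloses_def by (auto simp: rev_filter[symmetric] hd_rev last_rev)
qed

lemma parity_word_odd_run_encloses:
  assumes P: "parity_word w" and noEE: "\<And>p q. w \<noteq> p @ Emp # Emp # q" and z: "proper z"
    and second: "w ! 1 \<notin> {z, Emp}" and last: "last w \<notin> {z, Emp}"
    and "\<not> exponents_even w z"
  shows "\<exists>y. proper y \<and> y \<noteq> z \<and> encloses w z y"
proof -
  obtain \<alpha> m \<beta> where w: "w = \<alpha> @ replicate m z @ \<beta>" and "odd m"
    and \<alpha>: "\<alpha> \<noteq> [] \<longrightarrow> last \<alpha> \<noteq> z" and \<beta>: "\<beta> \<noteq> [] \<longrightarrow> hd \<beta> \<noteq> z"
    using not_exponents_even_odd_run[OF \<open>\<not> exponents_even w z\<close>] by blast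
  obtain m' where m: "m = Suc m'"
    using \<open>odd m\<close> odd_pos not0_implies_Suc by blast
  have "\<alpha> \<noteq> [Sig]" "\<alpha> \<noteq> [Sig, Emp]"
    using second w m by auto
  then obtain \<alpha>1 y where \<alpha>1: "\<alpha> = \<alpha>1 @ [y, Emp]" and y: "proper y" "y \<noteq> z"
    using odd_run_left_flank[OF P noEE z, of \<alpha> "replicate m' z @ \<beta>"] w m \<alpha> by auto
  have "\<beta> \<noteq> []"
    using last w m by (auto simp: replicate_append_same[symmetric])
  then obtain y' \<beta>1 where \<beta>1: "\<beta> = Emp # y' # \<beta>1" and y': "proper y'" "y' \<noteq> z"
    using odd_run_right_flank[OF P noEE z, of "\<alpha> @ replicate m' z" \<beta>] w m \<beta> last
    by (auto simp: replicate_append_same)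
  have w': "w = \<alpha>1 @ y # Emp # replicate m z @ Emp # y' # \<beta>1"
    using w \<alpha>1 \<beta>1 by simp
  then have "z \<in> set w" "y \<in> set w" "y' \<in> set w"
    using m by simp_all
  then show ?thesis
    using flanked_odd_run_first_of_pair[OF P w' y(1) y'(1) z y(2) y'(2) \<open>odd m\<close>]
      parity_word_enclosesI[OF P z] y y' by blast
qed

section \<open>Cyclic distance and the induced order\<close>

lemma cyc_dist_le:
  assumes "i < length v" "v ! i = x"
  shows "cyc_dist v x \<le> min i (length v - i)"
proof -
  have "finite ((\<lambda>i. min i (length v - i)) ` {..<length v})"
    by simp
  then have "finite {min i (length v - i) | i. i < length v \<and> v ! i = x}"
    by (rule rev_finite_subset) auto
  then show ?thesis
    unfolding cyc_dist_def by (rule Min_le) (use assms in auto)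
qed

lemma cyc_dist_attained:
  assumes "x \<in> set v"
  shows "\<exists>i < length v. v ! i = x \<and> cyc_dist v x = min i (length v - i)"
proof -
  let ?D = "{min i (length v - i) | i. i < length v \<and> v ! i = x}"
  have "finite ((\<lambda>i. min i (length v - i)) ` {..<length v})"
    by simp
  then have "finite ?D"
    by (rule rev_finite_subset) auto
  moreover have "?D \<noteq> {}"
    using assms by (auto simp: in_set_conv_nth)
  ultimately have "Min ?D \<in> ?D"
    by (rule Min_in)
  then show ?thesis
    unfolding cyc_dist_def by auto
qed

lemma encloses_cyc_dist_less:
  assumes "encloses v z y" "y \<noteq> z"
  shows "cyc_dist v z < cyc_dist v y"
proof -
  let ?Q = "\<lambda>c. c \<in> {z, y}"
  obtain i where i: "i < length v" "v ! i = y" "cyc_dist v y = min i (length v - i)"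
    using cyc_dist_attained assms(1) unfolding encloses_def by blast
  have "v = take i v @ y # drop (Suc i) v"
    using id_take_nth_drop[OF i(1)] i(2) by simp
  then have fv: "filter ?Q v = filter ?Q (take i v) @ y # filter ?Q (drop (Suc i) v)"
    by (metis filter.simps(2) filter_append insertI2 singletonI)
  have "filter ?Q (take i v) \<noteq> []"
    using fv assms unfolding encloses_def by auto
  then have "z \<in> set (take i v)"
    using fv assms hd_in_set[of "filter ?Q (take i v)"] unfolding encloses_def by auto
  then obtain i1 where i1: "i1 < i" "v ! i1 = z"
    using i(1) by (auto simp: in_set_conv_nth)
  have "filter ?Q (drop (Suc i) v) \<noteq> []"
    using fv assms unfolding encloses_def by auto
  then have "z \<in> set (drop (Suc i) v)"
    using fv assms last_in_set[of "filter ?Q (drop (Suc i) v)"] unfolding encloses_def by auto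
  then obtain k where "k < length (drop (Suc i) v)" "drop (Suc i) v ! k = z"
    by (meson in_set_conv_nth)
  then have k: "Suc i + k < length v" "v ! (Suc i + k) = z"
    by auto
  have "cyc_dist v z \<le> min i1 (length v - i1)" "cyc_dist v z \<le> min (Suc i + k) (length v - (Suc i + k))"
    using cyc_dist_le[of i1 v z] cyc_dist_le[of "Suc i + k" v z] i1 k i(1) by simp_all
  then show ?thesis
    using i i1 k by linarith
qed

lemma filter_expand: "\<not> Q Emp \<Longrightarrow> filter Q (expand u) = filter Q u"
  by (induction u rule: expand.induct) auto

lemma set_subset_expand: "set u \<subseteq> insert Emp (set (expand u))"
  by (induction u rule: expand.induct) auto

lemma induced_prec_proper: "induced_prec W x y \<Longrightarrow> proper y"
  unfolding induced_prec_def prec_from_def Let_def by auto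

lemma not_prec_from_enclosed:
  assumes "encloses u z y" "proper y" "proper z" "y \<noteq> z"
  shows "\<not> prec_from u y z"
proof -
  define v where "v = Sig # Emp # Emp # expand u @ [Emp, Emp]"
  have "filter (\<lambda>c. c \<in> {z, y}) v = filter (\<lambda>c. c \<in> {z, y}) u"
    unfolding v_def using filter_expand[of "\<lambda>c. c \<in> {z, y}" u] assms(2,3) properD by auto
  moreover have "y \<in> set v"
    using assms(1,2) set_subset_expand[of u] properD unfolding v_def encloses_def by auto
  ultimately have "encloses v z y"
    using assms(1) unfolding encloses_def by simp
  then have "cyc_dist v z < cyc_dist v y"
    using encloses_cyc_dist_less assms(4) by blast
  then show ?thesis
    using assms(2) properD unfolding prec_from_def v_def Let_def by auto
qed

lemma cyc_dist_padded_proper: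
  assumes v: "v = Sig # Emp # Emp # e @ [Emp, Emp]" and y: "proper y" "y \<in> set v"
  shows "3 \<le> cyc_dist v y"
proof -
  obtain i where i: "i < length v" "v ! i = y" "cyc_dist v y = min i (length v - i)"
    using cyc_dist_attained[OF y(2)] by blast
  have "3 \<le> i"
  proof (rule ccontr)
    assume "\<not> 3 \<le> i"
    then have "i = 0 \<or> i = 1 \<or> i = 2"
      by auto
    then show False
      using i(2) properD[OF y(1)] v by auto
  qed
  moreover have "3 \<le> length v - i"
  proof (rule ccontr)
    assume "\<not> 3 \<le> length v - i"
    then have "i = length v - 1 \<or> i = length v - 2"
      using i(1) by auto
    then have "v ! i = Emp"
      using v by (auto simp: nth_append)
    then show False
      using i(2) properD[OF y(1)] by auto
  qed
  ultimately show ?thesis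
    using i(3) by simp
qed

lemma not_prec_from_first_letter:
  assumes "proper y"
  shows "\<not> prec_from (a # u) y a"
proof
  assume prec: "prec_from (a # u) y a"
  define v where "v = Sig # Emp # Emp # expand (a # u) @ [Emp, Emp]"
  have "v ! 3 = a"
    unfolding v_def by (cases u) (simp_all add: numeral_3_eq_3)
  then have "cyc_dist v a \<le> 3"
    using cyc_dist_le[of 3 v a] unfolding v_def by simp
  moreover have "3 \<le> cyc_dist v y"
  proof -
    have "y \<in> set v"
      using prec assms set_subset_expand[of "a # u"] properD
      unfolding prec_from_def v_def Let_def by auto
    then show ?thesis
      using cyc_dist_padded_proper[OF v_def assms] by blast
  qed
  moreover have "cyc_dist v y < cyc_dist v a"
    using prec assms properD unfolding prec_from_def v_def Let_def by auto
  ultimately show False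
    by simp
qed

section \<open>Multisuns and their rim words\<close>

lemma inscribed_clique: "K \<in> inscribed V E \<Longrightarrow> clique V E K"
  unfolding inscribed_def maximal_clique_def by simp

lemma finite_inscribed: "finite V \<Longrightarrow> finite (inscribed V E)"
  by (rule finite_subset[of _ "Pow V"]) (auto simp: inscribed_def maximal_clique_def clique_def)

lemma clique_subset_maximal_clique:
  assumes "finite V" "clique V E K"
  shows "\<exists>M. maximal_clique V E M \<and> K \<subseteq> M"
proof -
  let ?A = "{M. clique V E M \<and> K \<subseteq> M}"
  have "finite ?A"
    by (rule finite_subset[of _ "Pow V"]) (use assms(1) in \<open>auto simp: clique_def\<close>)
  moreover have "K \<in> ?A"
    using assms(2) by simp
  ultimately obtain M where M: "M \<in> ?A" "\<forall>M' \<in> ?A. M \<subseteq> M' \<longrightarrow> M = M'"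
    using finite_has_maximal[of ?A] by blast
  have "maximal_clique V E M"
    unfolding maximal_clique_def
  proof (intro conjI notI)
    show "clique V E M"
      using M(1) by simp
    assume "\<exists>K'. clique V E K' \<and> M \<subset> K'"
    then show False
      using M by blast
  qed
  then show ?thesis
    using M(1) by blast
qed

lemma multisun_rim_edge:
  assumes "multisun V E c" "i < card V"
  shows "E (c i) (c (Suc i mod card V)) \<and> c i \<noteq> c (Suc i mod card V) \<and>
    (\<forall>K \<in> inscribed V E. \<not> (c i \<in> K \<and> c (Suc i mod card V) \<in> K))"
proof -
  let ?u = "c (Suc i mod card V)"
  have rim: "{K. maximal_clique V E K \<and> card K = 2} = {{c i, c (Suc i mod card V)} | i. i < card V}"
    and noncons: "\<forall>K \<in> inscribed V E. \<forall>x\<in>K. \<forall>y\<in>K. x \<noteq> y \<longrightarrow> \<not> consecutive V c x y"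
    using assms(1) unfolding multisun_def hamiltonian_rim_def by simp_all
  have "{c i, ?u} \<in> {K. maximal_clique V E K \<and> card K = 2}"
    unfolding rim using assms(2) by blast
  then have "maximal_clique V E {c i, ?u}" "card {c i, ?u} = 2"
    by simp_all
  have ne: "c i \<noteq> ?u"
  proof
    assume "c i = ?u"
    then show False
      using \<open>card {c i, ?u} = 2\<close> by simp
  qed
  then have "E (c i) ?u"
    using \<open>maximal_clique V E {c i, ?u}\<close> unfolding maximal_clique_def clique_def by blast
  moreover have "consecutive V c (c i) ?u"
    unfolding consecutive_def using assms(2) by blast
  ultimately show ?thesis
    using noncons ne by blast
qed

lemma multisun_rim_neighbour:
  assumes "multisun V E c" "v \<in> V"
  shows "\<exists>u \<in> V. u \<noteq> v \<and> E v u \<and> (\<forall>K \<in> inscribed V E. \<not> (v \<in> K \<and> u \<in> K))"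
proof -
  have c: "bij_betw c {..<card V} V" "3 \<le> card V"
    using assms(1) unfolding multisun_def hamiltonian_rim_def by simp_all
  then obtain i where "i < card V" "c i = v"
    using assms(2) unfolding bij_betw_def by (metis imageE lessThan_iff)
  moreover have "c (Suc i mod card V) \<in> V"
    using c bij_betwE by fastforce
  ultimately show ?thesis
    using multisun_rim_edge[OF assms(1) \<open>i < card V\<close>] by (metis (no_types))
qed

lemma clique_delete_cliques: "clique V (delete_cliques E S) K \<Longrightarrow> clique V E K"
  unfolding clique_def delete_cliques_def by blast

lemma inscribed_clique_delete_cliques:
  assumes meet: "\<And>K K'. K \<in> inscribed V E \<Longrightarrow> K' \<in> inscribed V E \<Longrightarrow> K \<noteq> K' \<Longrightarrow>
      \<exists>v. K \<inter> K' \<subseteq> {v}"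
    and "S \<subseteq> inscribed V E" "K \<in> inscribed V E - S"
  shows "clique V (delete_cliques E S) K"
proof -
  have K: "clique V E K"
    using assms(3) inscribed_clique by blast
  have "\<not> (x \<in> K' \<and> y \<in> K')" if "x \<in> K" "y \<in> K" "x \<noteq> y" "K' \<in> S" for x y K'
  proof
    assume "x \<in> K' \<and> y \<in> K'"
    moreover obtain v where "K \<inter> K' \<subseteq> {v}"
      using meet[of K K'] assms(2,3) \<open>K' \<in> S\<close> by blast
    ultimately show False
      using that by blast
  qed
  then show ?thesis
    using K unfolding clique_def delete_cliques_def by blast
qed

lemma inscribed_subset_inscribed_delete_cliques:
  assumes meet: "\<And>K K'. K \<in> inscribed V E \<Longrightarrow> K' \<in> inscribed V E \<Longrightarrow> K \<noteq> K' \<Longrightarrow>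
      \<exists>v. K \<inter> K' \<subseteq> {v}"
    and S: "S \<subseteq> inscribed V E"
  shows "inscribed V E - S \<subseteq> inscribed V (delete_cliques E S)"
proof
  fix K assume K: "K \<in> inscribed V E - S"
  have "\<not> (\<exists>K'. clique V (delete_cliques E S) K' \<and> K \<subset> K')"
    using K clique_delete_cliques unfolding inscribed_def maximal_clique_def by blast
  then have "maximal_clique V (delete_cliques E S) K"
    unfolding maximal_clique_def using inscribed_clique_delete_cliques[OF meet S K] by blast
  then show "K \<in> inscribed V (delete_cliques E S)"
    using K unfolding inscribed_def by simp
qed

lemma delete_cliques_small_clique_extends:
  assumes ms: "multisun V E c" and S: "S \<subseteq> inscribed V E"
    and K: "clique V (delete_cliques E S) K" "card K \<le> 1"
  shows "\<exists>K'. clique V (delete_cliques E S) K' \<and> K \<subset> K'"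
proof -
  have "graph V E" "3 \<le> card V"
    using ms unfolding multisun_def hamiltonian_rim_def by simp_all
  then have fin: "finite V" and sym: "\<And>x y. E x y \<Longrightarrow> E y x" and "V \<noteq> {}"
    unfolding graph_def by auto
  have "finite K"
    using K(1) fin finite_subset unfolding clique_def by blast
  obtain v where v: "v \<in> V" "K \<subseteq> {v}"
  proof (cases "K = {}")
    case False
    then obtain v where "v \<in> K"
      by blast
    then have "K = {v}"
      using K(2) card_le_Suc0_iff_eq[OF \<open>finite K\<close>] by auto
    then show ?thesis
      using that K(1) unfolding clique_def by blast
  qed (use \<open>V \<noteq> {}\<close> in blast)
  obtain u where u: "u \<in> V" "u \<noteq> v" "E v u" "\<forall>K' \<in> inscribed V E. \<not> (v \<in> K' \<and> u \<in> K')"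
    using multisun_rim_neighbour[OF ms v(1)] by blast
  have "clique V (delete_cliques E S) {v, u}"
    unfolding clique_def delete_cliques_def using u v(1) sym S by blast
  moreover have "K \<subset> {v, u}"
    using v(2) u(2) by blast
  ultimately show ?thesis
    by blast
qed

lemma delete_cliques_large_maximal_clique:
  assumes fin: "finite V"
    and meet: "\<And>K K'. K \<in> inscribed V E \<Longrightarrow> K' \<in> inscribed V E \<Longrightarrow> K \<noteq> K' \<Longrightarrow>
      \<exists>v. K \<inter> K' \<subseteq> {v}"
    and S: "S \<subseteq> inscribed V E"
    and K: "maximal_clique V (delete_cliques E S) K" "3 \<le> card K"
  shows "K \<in> inscribed V E - S"
proof -
  let ?E = "delete_cliques E S"
  have cK: "clique V ?E K" and no_ext: "\<not> (\<exists>K'. clique V ?E K' \<and> K \<subset> K')"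
    using K(1) unfolding maximal_clique_def by auto
  obtain M where M: "maximal_clique V E M" "K \<subseteq> M"
    using clique_subset_maximal_clique[OF fin clique_delete_cliques[OF cK]] by blast
  then have "finite M"
    using fin finite_subset unfolding maximal_clique_def clique_def by blast
  then have "3 \<le> card M"
    using K(2) card_mono[OF _ M(2)] by linarith
  then have MI: "M \<in> inscribed V E"
    using M(1) unfolding inscribed_def by simp
  have "finite K" "\<not> card K \<le> Suc 0"
    using K(2) card.infinite by fastforce+
  then obtain x y where "x \<in> K" "y \<in> K" "x \<noteq> y"
    using card_le_Suc0_iff_eq by blast
  then have "?E x y"
    using cK unfolding clique_def by blast
  then have "M \<notin> S"
    using \<open>x \<in> K\<close> \<open>y \<in> K\<close> M(2) unfolding delete_cliques_def by blast
  then have "clique V ?E M"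
    using inscribed_clique_delete_cliques[OF meet S] MI by blast
  then have "K = M"
    using no_ext M(2) by blast
  then show ?thesis
    using MI \<open>M \<notin> S\<close> by blast
qed

lemma inscribed_delete_cliques_subset:
  assumes ms: "multisun V E c"
    and meet: "\<And>K K'. K \<in> inscribed V E \<Longrightarrow> K' \<in> inscribed V E \<Longrightarrow> K \<noteq> K' \<Longrightarrow>
      \<exists>v. K \<inter> K' \<subseteq> {v}"
    and S: "S \<subseteq> inscribed V E"
  shows "inscribed V (delete_cliques E S) \<subseteq> inscribed V E - S"
proof
  fix K assume "K \<in> inscribed V (delete_cliques E S)"
  then have K: "maximal_clique V (delete_cliques E S) K" "card K \<noteq> 2"
    unfolding inscribed_def by auto
  have "finite V"
    using ms unfolding multisun_def graph_def by simp
  have "\<not> card K \<le> 1"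
    using delete_cliques_small_clique_extends[OF ms S] K(1) unfolding maximal_clique_def by blast
  then show "K \<in> inscribed V E - S"
    using delete_cliques_large_maximal_clique[OF \<open>finite V\<close> meet S K(1)] K(2) by simp
qed

lemma inscribed_delete_cliques:
  assumes "multisun V E c"
    and "\<And>K K'. K \<in> inscribed V E \<Longrightarrow> K' \<in> inscribed V E \<Longrightarrow> K \<noteq> K' \<Longrightarrow>
      \<exists>v. K \<inter> K' \<subseteq> {v}"
    and "S \<subseteq> inscribed V E"
  shows "inscribed V (delete_cliques E S) = inscribed V E - S"
  using inscribed_delete_cliques_subset[OF assms] inscribed_subset_inscribed_delete_cliques[OF assms(2,3)]
  by blast

lemma label_eq_SigI:
  assumes "finite V" "K \<in> inscribed V E" "K' \<in> inscribed V E" "K \<noteq> K'" "v \<in> K" "v \<in> K'"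
  shows "label V E v = Sig"
proof -
  have "card {K, K'} \<le> card {K \<in> inscribed V E. v \<in> K}"
    by (rule card_mono) (use assms finite_inscribed[OF assms(1)] in auto)
  then have "2 \<le> card {K \<in> inscribed V E. v \<in> K}"
    using assms(4) by simp
  then show ?thesis
    unfolding label_def by simp
qed

lemma label_eq_SigD:
  assumes "finite V" "label V E v = Sig"
  shows "\<exists>K K'. K \<in> inscribed V E \<and> K' \<in> inscribed V E \<and> K \<noteq> K' \<and> v \<in> K \<and> v \<in> K'"
proof -
  let ?A = "{K \<in> inscribed V E. v \<in> K}"
  have "2 \<le> card ?A"
    using assms(2) unfolding label_def by (auto split: if_splits)
  then have "\<not> card ?A \<le> Suc 0"
    by simp
  then show ?thesis
    using card_le_Suc0_iff_eq[of ?A] finite_inscribed[OF assms(1)] by auto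
qed

lemma label_eq_PrpI:
  assumes "K \<in> inscribed V E" "v \<in> K" "\<And>K'. K' \<in> inscribed V E \<Longrightarrow> v \<in> K' \<Longrightarrow> K' = K"
  shows "label V E v = Prp K"
proof -
  have "{K \<in> inscribed V E. v \<in> K} = {K}"
    using assms by blast
  moreover have "(THE K. K \<in> inscribed V E \<and> v \<in> K) = K"
    by (rule the_equality) (use assms in blast)+
  ultimately show ?thesis
    unfolding label_def using assms(1,2) by auto
qed

lemma label_eq_PrpD:
  assumes "finite V" "label V E v = Prp K"
  shows "K \<in> inscribed V E \<and> v \<in> K"
proof -
  let ?A = "{K \<in> inscribed V E. v \<in> K}"
  have "\<not> 2 \<le> card ?A" "\<exists>K \<in> inscribed V E. v \<in> K"
    and K: "K = (THE K. K \<in> inscribed V E \<and> v \<in> K)"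
    using assms(2) unfolding label_def by (auto split: if_splits)
  then have "\<exists>!K. K \<in> inscribed V E \<and> v \<in> K"
    using card_le_Suc0_iff_eq[of ?A] finite_inscribed[OF assms(1)] by auto
  then show ?thesis
    unfolding K by (rule theI')
qed

lemma length_rim_word [simp]: "length (rim_word V E c) = card V"
  unfolding rim_word_def by simp

text \<open>Two inscribed cliques are needed for \<open>\<xi>\<close> to be labelled \<open>\<sigma>\<close>.\<close>

locale sunoid_rim =
  fixes V :: "'v set" and E :: "'v \<Rightarrow> 'v \<Rightarrow> bool" and c :: "nat \<Rightarrow> 'v" and \<xi> :: 'v
  assumes sunoid: "sunoid V E c" and N3: "N3 V E \<xi>"
    and two_inscribed: "2 \<le> card (inscribed V E)"
begin

lemma multisun: "multisun V E c"
  using sunoid unfolding sunoid_def by simp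

lemma finite_V: "finite V"
  using multisun unfolding multisun_def graph_def by simp

lemma odd_card_V: "odd (card V)"
  using multisun unfolding multisun_def by simp

lemma rim_bij: "bij_betw c {..<card V} V" and card_V_ge3: "3 \<le> card V"
  using multisun unfolding multisun_def hamiltonian_rim_def by simp_all

lemma xi_in_inscribed: "K \<in> inscribed V E \<Longrightarrow> \<xi> \<in> K"
  using N3 unfolding N3_def by blast

lemma inscribed_inter: "K \<in> inscribed V E \<Longrightarrow> K' \<in> inscribed V E \<Longrightarrow> K \<noteq> K' \<Longrightarrow> K \<inter> K' = {\<xi>}"
  using N3 unfolding N3_def by blast

lemma inscribed_delete:
  assumes "S \<subseteq> inscribed V E"
  shows "inscribed V (delete_cliques E S) = inscribed V E - S"
proof (rule inscribed_delete_cliques[OF multisun _ assms])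
  fix K K' assume "K \<in> inscribed V E" "K' \<in> inscribed V E" "K \<noteq> K'"
  then show "\<exists>v. K \<inter> K' \<subseteq> {v}"
    using inscribed_inter by blast
qed

lemma label_eq_Sig_iff: "label V E v = Sig \<longleftrightarrow> v = \<xi>"
proof
  assume "label V E v = Sig"
  then obtain K K' where "K \<in> inscribed V E" "K' \<in> inscribed V E" "K \<noteq> K'" "v \<in> K \<inter> K'"
    using label_eq_SigD[OF finite_V] by blast
  then show "v = \<xi>"
    using inscribed_inter by blast
next
  have "\<not> card (inscribed V E) \<le> Suc 0"
    using two_inscribed by simp
  then obtain K K' where K: "K \<in> inscribed V E" "K' \<in> inscribed V E" "K \<noteq> K'"
    using card_le_Suc0_iff_eq[OF finite_inscribed[OF finite_V]] by blast
  then show "v = \<xi> \<Longrightarrow> label V E v = Sig"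
    using label_eq_SigI[OF finite_V K xi_in_inscribed[OF K(1)] xi_in_inscribed[OF K(2)]] by simp
qed

lemma label_xi: "label V E \<xi> = Sig"
  using label_eq_Sig_iff by simp

lemma mem_inscribed_iff_label:
  assumes "K \<in> inscribed V E"
  shows "v \<in> K \<longleftrightarrow> label V E v \<in> {Sig, Prp K}"
proof
  assume "v \<in> K"
  have "label V E v = Prp K" if "v \<noteq> \<xi>"
  proof (rule label_eq_PrpI[OF assms \<open>v \<in> K\<close>])
    fix K' assume "K' \<in> inscribed V E" "v \<in> K'"
    then show "K' = K"
      using inscribed_inter[OF assms, of K'] \<open>v \<in> K\<close> that by blast
  qed
  then show "label V E v \<in> {Sig, Prp K}"
    using label_eq_Sig_iff by blast
next
  assume "label V E v \<in> {Sig, Prp K}"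
  then consider "label V E v = Sig" | "label V E v = Prp K"
    by blast
  then show "v \<in> K"
  proof cases
    case 1
    then show ?thesis
      using label_eq_Sig_iff xi_in_inscribed[OF assms] by simp
  next
    case 2
    then show ?thesis
      using label_eq_PrpD[OF finite_V] by blast
  qed
qed

text \<open>
  Deleting the other inscribed cliques turns the rim segment into a \<open>K\<close>-path, resp. a
  \<open>KK'\<close>-path, of a sub-multisun, whose common vertex is still \<open>\<xi>\<close>.
\<close>

lemma rim_gap_same_clique:
  assumes K: "K \<in> inscribed V E" and "i < card V" "1 \<le> k" "k < card V"
    and "c i \<in> K" "c ((i + k) mod card V) \<in> K"
    and "\<And>j. 0 < j \<Longrightarrow> j < k \<Longrightarrow> c ((i + j) mod card V) \<notin> K"
  shows "even (k + 1)"
proof -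
  let ?E = "delete_cliques E (inscribed V E - {K})"
  have ins: "inscribed V ?E = {K}"
    using inscribed_delete[of "inscribed V E - {K}"] K by auto
  have "inscribed V E - {K} \<subset> inscribed V E"
    using K by blast
  then have "N1 V ?E c"
    using sunoid unfolding sunoid_def N_conditions_def by blast
  moreover have "AB_path V ?E c K K i k"
    unfolding AB_path_def rim_path_def path_end_def ins using assms by auto
  ultimately show ?thesis
    using K ins unfolding N1_def by blast
qed

lemma rim_gap_distinct_cliques:
  assumes K: "K \<in> inscribed V E" and K': "K' \<in> inscribed V E" and "K \<noteq> K'"
    and "i < card V" "1 \<le> k" "k < card V"
    and "c i \<in> K" "c i \<noteq> \<xi>" "c ((i + k) mod card V) \<in> K'" "c ((i + k) mod card V) \<noteq> \<xi>"
    and "\<And>j. 0 < j \<Longrightarrow> j < k \<Longrightarrow> c ((i + j) mod card V) \<notin> K \<union> K'"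
  shows "odd (k + 1)"
proof -
  let ?E = "delete_cliques E (inscribed V E - {K, K'})"
  have ins: "inscribed V ?E = {K, K'}"
    using inscribed_delete[of "inscribed V E - {K, K'}"] K K' by auto
  have "inscribed V E - {K, K'} \<subset> inscribed V E"
    using K by blast
  then obtain \<xi>' where "N3 V ?E \<xi>'" "N5 V ?E c \<xi>'"
    using sunoid unfolding sunoid_def N_conditions_def by blast
  moreover have "\<xi>' = \<xi>"
    using \<open>N3 V ?E \<xi>'\<close> inscribed_inter[OF K K' \<open>K \<noteq> K'\<close>] unfolding N3_def ins by blast
  moreover have "AB_path V ?E c K K' i k"
    unfolding AB_path_def rim_path_def path_end_def ins using assms by auto
  ultimately show ?thesis
    using \<open>K \<noteq> K'\<close> assms(8,10) ins unfolding N5_def path_end_def by blast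
qed

context
  fixes i0 assumes i0: "i0 < card V" and xi: "c i0 = \<xi>"
begin

lemma rotated_rim_word_nth:
  assumes "j \<le> card V"
  shows "(rotate i0 (rim_word V E c) @ [Sig]) ! j = label V E (c ((i0 + j) mod card V))"
proof (cases "j < card V")
  case True
  have "(i0 + j) mod card V < card V"
    using card_V_ge3 by simp
  then show ?thesis
    using True by (simp add: nth_append nth_rotate rim_word_def)
next
  case False
  then have "j = card V"
    using assms by simp
  then show ?thesis
    using i0 xi label_xi by (simp add: nth_append rim_word_def)
qed

lemma rotated_rim_word_nth_less:
  "j < card V \<Longrightarrow> rotate i0 (rim_word V E c) ! j = label V E (c ((i0 + j) mod card V))"
  using rotated_rim_word_nth[of j] by (simp add: nth_append)

lemma rotated_rim_word_nth_not_Sig: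
  assumes "0 < j" "j < card V"
  shows "rotate i0 (rim_word V E c) ! j \<noteq> Sig"
proof
  assume "rotate i0 (rim_word V E c) ! j = Sig"
  then have "c ((i0 + j) mod card V) = c i0"
    using rotated_rim_word_nth_less[OF assms(2)] xi label_eq_Sig_iff by simp
  moreover have "(i0 + j) mod card V < card V"
    using assms(2) by simp
  ultimately have "(i0 + j) mod card V = i0"
    using rim_bij i0 unfolding bij_betw_def inj_on_def by blast
  then show False
  proof (cases "i0 + j < card V")
    case False
    then have "(i0 + j) mod card V = i0 + j - card V"
      using i0 assms(2) by (simp add: le_mod_geq)
    then show False
      using \<open>(i0 + j) mod card V = i0\<close> assms by simp
  qed (use assms(1) in simp)
qed

lemma rotated_rim_word_Prp:
  "j < card V \<Longrightarrow> rotate i0 (rim_word V E c) ! j = Prp K \<Longrightarrow> K \<in> inscribed V E"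
  using rotated_rim_word_nth_less label_eq_PrpD[OF finite_V] by metis

lemma rim_shift: "c (((i0 + j1) mod card V + j) mod card V) = c ((i0 + (j1 + j)) mod card V)"
  by (simp add: mod_add_left_eq add.assoc)

lemma rotated_rim_word_same_gap:
  assumes X: "proper X" and j: "j1 < j2" "j2 \<le> card V" "j2 - j1 < card V"
    and ends: "(rotate i0 (rim_word V E c) @ [Sig]) ! j1 \<in> {Sig, X}"
      "(rotate i0 (rim_word V E c) @ [Sig]) ! j2 \<in> {Sig, X}"
    and between: "\<And>j. j1 < j \<Longrightarrow> j < j2 \<Longrightarrow> rotate i0 (rim_word V E c) ! j \<noteq> X"
  shows "even (j2 - j1 + 1)"
proof -
  let ?w = "rotate i0 (rim_word V E c)"
  obtain K where XK: "X = Prp K"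
    using X unfolding proper_def by blast
  obtain j0 where "j0 < card V" "?w ! j0 = X"
  proof (cases "j1 = 0")
    case True
    then have "?w ! j2 \<in> {Sig, X}" "0 < j2" "j2 < card V"
      using ends(2) j by (auto simp: nth_append)
    then show ?thesis
      using that rotated_rim_word_nth_not_Sig by blast
  next
    case False
    then have "?w ! j1 \<in> {Sig, X}" "0 < j1" "j1 < card V"
      using ends(1) j by (auto simp: nth_append)
    then show ?thesis
      using that rotated_rim_word_nth_not_Sig by blast
  qed
  then have K: "K \<in> inscribed V E"
    using rotated_rim_word_Prp XK by blast
  show ?thesis
  proof (rule rim_gap_same_clique[OF K])
    show "(i0 + j1) mod card V < card V" "1 \<le> j2 - j1" "j2 - j1 < card V"
      using j card_V_ge3 by auto
    show "c ((i0 + j1) mod card V) \<in> K" "c (((i0 + j1) mod card V + (j2 - j1)) mod card V) \<in> K"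
      using ends j rotated_rim_word_nth mem_inscribed_iff_label[OF K] XK rim_shift[of j1 "j2 - j1"]
      by auto
  next
    fix j assume "0 < j" "j < j2 - j1"
    then have "?w ! (j1 + j) \<notin> {Sig, X}"
      using between rotated_rim_word_nth_not_Sig j by simp
    then show "c (((i0 + j1) mod card V + j) mod card V) \<notin> K"
      using rotated_rim_word_nth_less \<open>j < j2 - j1\<close> j mem_inscribed_iff_label[OF K] XK rim_shift
      by simp
  qed
qed

lemma rotated_rim_word_distinct_gap:
  assumes X: "proper X" and Y: "proper Y" and "X \<noteq> Y" and j: "j1 < j2" "j2 < card V"
    and ends: "rotate i0 (rim_word V E c) ! j1 = X" "rotate i0 (rim_word V E c) ! j2 = Y"
    and between: "\<And>j. j1 < j \<Longrightarrow> j < j2 \<Longrightarrow> rotate i0 (rim_word V E c) ! j \<notin> {X, Y}"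
  shows "odd (j2 - j1 + 1)"
proof -
  obtain K K' where XK: "X = Prp K" and YK: "Y = Prp K'"
    using X Y unfolding proper_def by blast
  have K: "K \<in> inscribed V E" and K': "K' \<in> inscribed V E"
    using rotated_rim_word_Prp[of j1 K] rotated_rim_word_Prp[of j2 K'] ends j XK YK by simp_all
  show ?thesis
  proof (rule rim_gap_distinct_cliques[OF K K'])
    show "K \<noteq> K'"
      using \<open>X \<noteq> Y\<close> XK YK by simp
    show "(i0 + j1) mod card V < card V" "1 \<le> j2 - j1" "j2 - j1 < card V"
      using j card_V_ge3 by auto
    show "c ((i0 + j1) mod card V) \<in> K" "c ((i0 + j1) mod card V) \<noteq> \<xi>"
      using ends j rotated_rim_word_nth_less mem_inscribed_iff_label[OF K] XK label_xi by auto
    show "c (((i0 + j1) mod card V + (j2 - j1)) mod card V) \<in> K'"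
      "c (((i0 + j1) mod card V + (j2 - j1)) mod card V) \<noteq> \<xi>"
      using ends j rotated_rim_word_nth_less mem_inscribed_iff_label[OF K'] YK label_xi
        rim_shift[of j1 "j2 - j1"] by auto
  next
    fix j assume "0 < j" "j < j2 - j1"
    then have "rotate i0 (rim_word V E c) ! (j1 + j) \<notin> {Sig, X, Y}"
      using between rotated_rim_word_nth_not_Sig j by simp
    then show "c (((i0 + j1) mod card V + j) mod card V) \<notin> K \<union> K'"
      using rotated_rim_word_nth_less \<open>j < j2 - j1\<close> j mem_inscribed_iff_label[OF K]
        mem_inscribed_iff_label[OF K'] XK YK rim_shift by simp
  qed
qed

lemma rotated_rim_word_parity: "parity_word (rotate i0 (rim_word V E c))"
proof (rule parity_wordI)
  show "rotate i0 (rim_word V E c) ! 0 = Sig"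
    using rotated_rim_word_nth_less[of 0] i0 xi label_xi by simp
  show "odd (length (rotate i0 (rim_word V E c)))"
    using odd_card_V by simp
qed (use rotated_rim_word_nth_not_Sig rotated_rim_word_same_gap rotated_rim_word_distinct_gap in auto)

end

lemma rim_word_cyclic_parity: "cyclic_parity_word (rim_word V E c)"
  unfolding cyclic_parity_word_def
proof (intro allI impI)
  fix s t assume r: "rim_word V E c = s @ Sig # t"
  then have "length s < card V"
    using length_rim_word[of V E c] by simp
  moreover have "rim_word V E c ! length s = label V E (c (length s))"
    using \<open>length s < card V\<close> by (simp add: rim_word_def)
  then have "label V E (c (length s)) = Sig"
    using r by simp
  then have "c (length s) = \<xi>"
    using label_eq_Sig_iff by simp
  ultimately have "parity_word (rotate (length s) (rim_word V E c))"
    by (rule rotated_rim_word_parity)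
  then show "parity_word (Sig # t @ s)"
    using r by (simp add: rotate_append)
qed

end

lemma sunoid_rim_word_cyclic_parity:
  assumes "sunoid V E c" "2 \<le> card (inscribed V E)"
  shows "cyclic_parity_word (rim_word V E c)"
proof -
  obtain \<xi> where "N3 V E \<xi>"
    using assms(1) unfolding sunoid_def N_conditions_def by blast
  then interpret sunoid_rim V E c \<xi>
    using assms by unfold_locales
  show ?thesis
    by (rule rim_word_cyclic_parity)
qed

section \<open>Sunwords\<close>

lemma nth_eq_unique_occurrence:
  assumes "x = s @ c # t" "c \<notin> set s" "c \<notin> set t" "j < length x" "x ! j = c"
  shows "j = length s"
proof (rule linorder_cases[of j "length s"])
  assume "j < length s"
  then show ?thesis
    using assms nth_mem[of j s] by (simp add: nth_append)
next
  assume "j = length s"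
  then show ?thesis .
next
  assume "length s < j"
  then have "t ! (j - Suc (length s)) = c" "j - Suc (length s) < length t"
    using assms by (auto simp: nth_append nth_Cons')
  then show ?thesis
    using assms(3) nth_mem by metis
qed

lemma rotate_unique_occurrence:
  assumes x: "x = s @ c # t" "c \<notin> set s" "c \<notin> set t" and r: "rotate k x = c # u"
  shows "u = t @ s"
proof -
  have "x ! (k mod length x) = c"
    using hd_rotate_conv_nth[of x k] r x(1) by simp
  then have "k mod length x = length s"
    using nth_eq_unique_occurrence[OF x] x(1) by simp
  then have "rotate k x = rotate (length s) x"
    by (metis rotate_conv_mod)
  also have "\<dots> = c # t @ s"
    using x(1) by (simp add: rotate_append)
  finally show ?thesis
    using r by simp
qed

lemma rev_rotate_eq_Cons:
  assumes "rev (rotate k x) = c # u"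
  shows "rotate (length u + k) x = c # rev u"
proof -
  have "rotate k x = rev u @ [c]"
    using assms by (metis rev_rev_ident rev.simps(2))
  then have "rotate (length u + k) x = rotate (length (rev u)) (rev u @ [c])"
    by (metis length_rev rotate_rotate)
  then show ?thesis
    using rotate_append[of "rev u" "[c]"] by simp
qed

lemma rotation_unique_occurrence:
  assumes x: "x = s @ c # t" "c \<notin> set s" "c \<notin> set t"
    and A: "A = rotate k x \<or> A = rev (rotate k x)" and "A = c # u"
  shows "u = t @ s \<or> u = rev (t @ s)"
  using A
proof
  assume "A = rotate k x"
  then show ?thesis
    using rotate_unique_occurrence[OF x] \<open>A = c # u\<close> by blast
next
  assume "A = rev (rotate k x)"
  then have "rotate (length u + k) x = c # rev u"
    using rev_rotate_eq_Cons[of k x c u] \<open>A = c # u\<close> by simp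
  then have "rev u = t @ s"
    by (rule rotate_unique_occurrence[OF x])
  then show ?thesis
    by (metis rev_rev_ident)
qed

lemma set_pat: "set (pat xs) \<subseteq> set xs" "set xs \<subseteq> insert Emp (set (pat xs))"
  by (induction xs rule: pat.induct) auto

lemma word_class_letters:
  assumes "u \<in> word_class r"
  shows "set u \<subseteq> insert Emp (set r)"
proof -
  have "set (pat u) = set (pat r)"
    using assms unfolding word_class_def approx_def cyc_equiv_def by auto
  then show ?thesis
    using set_pat[of u] set_pat[of r] by blast
qed

lemma card_proper_letters_le_card_inscribed:
  assumes "finite V"
  shows "card {x \<in> alphabet (word_class (rim_word V E c)). proper x} \<le> card (inscribed V E)"
proof -
  have "{x \<in> alphabet (word_class (rim_word V E c)). proper x} \<subseteq> Prp ` inscribed V E"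
  proof
    fix x assume x: "x \<in> {x \<in> alphabet (word_class (rim_word V E c)). proper x}"
    then obtain u where "u \<in> word_class (rim_word V E c)" "x \<in> set u"
      unfolding alphabet_def by auto
    then have "x \<in> set (rim_word V E c)"
      using word_class_letters properD[of x] x by blast
    then obtain i where "x = label V E (c i)"
      unfolding rim_word_def by auto
    moreover obtain K where "x = Prp K"
      using x unfolding proper_def by blast
    ultimately show "x \<in> Prp ` inscribed V E"
      using label_eq_PrpD[OF assms] by fastforce
  qed
  then have "card {x \<in> alphabet (word_class (rim_word V E c)). proper x} \<le> card (Prp ` inscribed V E)"
    using finite_inscribed[OF assms] by (simp add: card_mono)
  also have "\<dots> \<le> card (inscribed V E)"
    by (rule card_image_le[OF finite_inscribed[OF assms]])
  finally show ?thesis .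
qed

lemma sunword_cyclic_parity_pattern:
  assumes "sunword W" "2 \<le> card {x \<in> alphabet W. proper x}"
  shows "\<exists>r. cyclic_parity_word r \<and> (\<forall>x \<in> W. pat x = x \<longrightarrow> (\<exists>k. x = rotate k r \<or> x = rev (rotate k r)))"
proof -
  obtain V E c where sun: "sunoid V E c" and W: "W = word_class (rim_word V E c)"
    using assms(1) unfolding sunword_def by blast
  have "multisun V E c"
    using sun unfolding sunoid_def by simp
  then have "finite V"
    unfolding multisun_def graph_def by simp
  then have "2 \<le> card (inscribed V E)"
    using card_proper_letters_le_card_inscribed[of V E c] assms(2) unfolding W by linarith
  then have "cyclic_parity_word (pat (rim_word V E c))"
    by (rule cyclic_parity_word_pat[OF sunoid_rim_word_cyclic_parity[OF sun]])
  moreover have "\<exists>k. x = rotate k (pat (rim_word V E c)) \<or> x = rev (rotate k (pat (rim_word V E c)))"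
    if "x \<in> W" "pat x = x" for x
    using that unfolding W word_class_def approx_def cyc_equiv_def by simp
  ultimately show ?thesis
    by blast
qed

lemma sunword_Sig_representatives:
  assumes "sunword W" "2 \<le> card {x \<in> alphabet W. proper x}"
    and w: "Sig # u \<in> W" "pat (Sig # u) = Sig # u"
  shows "parity_word (Sig # u)"
    and "\<And>u'. Sig # u' \<in> W \<Longrightarrow> pat (Sig # u') = Sig # u' \<Longrightarrow> u' = u \<or> u' = rev u"
proof -
  obtain r where r: "cyclic_parity_word r"
    and rep: "\<And>x. x \<in> W \<Longrightarrow> pat x = x \<Longrightarrow> \<exists>k. x = rotate k r \<or> x = rev (rotate k r)"
    using sunword_cyclic_parity_pattern[OF assms(1,2)] by blast
  obtain k where k: "Sig # u = rotate k r \<or> Sig # u = rev (rotate k r)"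
    using rep[OF w] by blast
  then have "cyclic_parity_word (Sig # u)"
    using cyclic_parity_word_rotate[OF r] cyclic_parity_word_rev by metis
  then show "parity_word (Sig # u)"
    using cyclic_parity_wordD[of "[]" u] by simp
  have "Sig \<in> set r"
    using k by (metis list.set_intros(1) set_rev set_rotate)
  then obtain s t where st: "r = s @ Sig # t"
    by (meson split_list)
  then have "Sig \<notin> set s" "Sig \<notin> set t"
    using parity_word_Sig_head[OF cyclic_parity_wordD[of s t]] r by fastforce+
  note unique = rotation_unique_occurrence[OF st this]
  fix u' assume "Sig # u' \<in> W" "pat (Sig # u') = Sig # u'"
  then obtain k' where "Sig # u' = rotate k' r \<or> Sig # u' = rev (rotate k' r)"
    using rep by blast
  then show "u' = u \<or> u' = rev u"
    using unique[OF k] unique[of "Sig # u'" k' u'] by auto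
qed

lemma not_induced_prec_first_letter:
  assumes "\<And>u. Sig # u \<in> W \<Longrightarrow> pat (Sig # u) = Sig # u \<Longrightarrow> \<exists>u0. u = a # u0" "proper y"
  shows "\<not> induced_prec W y a"
  using assms not_prec_from_first_letter unfolding induced_prec_def by blast

lemma not_induced_prec_enclosed:
  assumes "\<And>u. Sig # u \<in> W \<Longrightarrow> pat (Sig # u) = Sig # u \<Longrightarrow> encloses u z y"
    and "proper y" "proper z" "y \<noteq> z"
  shows "\<not> induced_prec W y z"
  using assms not_prec_from_enclosed unfolding induced_prec_def by blast

lemma greatest_letter_proper_not_first:
  assumes "2 \<le> card {x \<in> alphabet W. proper x}" "a \<in> alphabet W" "proper a"
    and greatest: "\<forall>y \<in> alphabet W. y \<noteq> Emp \<and> y \<noteq> z \<longrightarrow> induced_prec W y z"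
    and first: "\<And>u. Sig # u \<in> W \<Longrightarrow> pat (Sig # u) = Sig # u \<Longrightarrow> \<exists>u0. u = a # u0"
  shows "proper z" "z \<noteq> a"
proof -
  show "proper z"
  proof (cases "z = a")
    case False
    then show ?thesis
      using induced_prec_proper greatest assms(2) properD[OF assms(3)] by blast
  qed (use assms(3) in simp)
  show "z \<noteq> a"
  proof
    assume "z = a"
    have "{x \<in> alphabet W. proper x} \<noteq> {a}"
      using assms(1) by force
    then obtain y where y: "y \<in> alphabet W" "proper y" "y \<noteq> a"
      using assms(2,3) by blast
    then have "\<not> induced_prec W y a"
      using not_induced_prec_first_letter first by blast
    then show False
      using greatest y \<open>z = a\<close> properD[OF y(2)] by blast
  qed
qed

lemma Sig_replicate_block:
  assumes "w = [Sig] @ replicate l1 a @ [Emp] @ wt @ [Emp] @ replicate ls a" "1 \<le> l1" "1 \<le> ls"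
  obtains u u0 u1 where "w = Sig # u" "u = a # u0" "rev u = a # u1"
proof -
  obtain k1 k2 where "l1 = Suc k1" "ls = Suc k2"
    using assms(2,3) by (metis Suc_le_D One_nat_def)
  define u where "u = replicate l1 a @ [Emp] @ wt @ [Emp] @ replicate ls a"
  have "w = Sig # u"
    using assms(1) unfolding u_def by simp
  moreover have "u = a # replicate k1 a @ [Emp] @ wt @ [Emp] @ replicate ls a"
    using \<open>l1 = Suc k1\<close> unfolding u_def by simp
  moreover have "rev u = a # replicate k2 a @ [Emp] @ rev wt @ [Emp] @ replicate l1 a"
    using \<open>ls = Suc k2\<close> unfolding u_def by (simp add: replicate_append_same)
  ultimately show ?thesis
    using that by blast
qed

theorem corollary2:
  fixes W :: "'v set letter list set"
    and a z :: "'v set letter"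
    and w wt :: "'v set letter list"
    and l1 ls :: nat
  assumes "sunword W"
    and "card {x \<in> alphabet W. proper x} \<ge> 3"
    and "a \<in> alphabet W" and "proper a"
    and "\<forall>x \<in> alphabet W. proper x \<and> x \<noteq> a \<longrightarrow> induced_prec W a x"
    and "w \<in> W" and "pat w = w"
    and "w = [Sig] @ replicate l1 a @ [Emp] @ wt @ [Emp] @ replicate ls a"
    and "l1 \<ge> 1" and "ls \<ge> 1"
    and "Sig \<notin> set wt"
    and "z \<in> alphabet W" and "z \<noteq> Emp"
    and "\<forall>y \<in> alphabet W. y \<noteq> Emp \<and> y \<noteq> z \<longrightarrow> induced_prec W y z"
  shows "exponents_even w z"
  \<comment> \<open>Not needed: the minimality of \<open>a\<close>, \<open>Sig \<notin> set wt\<close>, \<open>z \<in> alphabet W\<close>, \<open>z \<noteq> Emp\<close>.\<close>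
proof (rule ccontr)
  assume odd_run: "\<not> exponents_even w z"
  obtain u u0 u1 where u: "w = Sig # u" "u = a # u0" "rev u = a # u1"
    using Sig_replicate_block assms(8-10) by blast
  have card: "2 \<le> card {x \<in> alphabet W. proper x}"
    using assms(2) by simp
  note reps = sunword_Sig_representatives[OF assms(1) card assms(6,7)[unfolded u(1)]]
  have "\<exists>u0. u' = a # u0" if "Sig # u' \<in> W" "pat (Sig # u') = Sig # u'" for u'
    using reps(2)[OF that] u by blast
  note z = greatest_letter_proper_not_first[OF card assms(3,4,14) this]
  have "w ! 1 \<notin> {z, Emp}" "last w \<notin> {z, Emp}"
    using u hd_rev[of u] z(2) properD[OF assms(4)] by auto
  then obtain y where y: "proper y" "y \<noteq> z" "encloses w z y"
    using parity_word_odd_run_encloses[OF reps(1)[folded u(1)] pat_fixed_no_EE[OF assms(7)] z(1)] odd_run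
    by blast
  then have "encloses u z y"
    using u(1) encloses_Cons[of Sig z y u] properD[OF y(1)] properD[OF z(1)] by auto
  then have "encloses u' z y" if "Sig # u' \<in> W" "pat (Sig # u') = Sig # u'" for u'
    using reps(2)[OF that] encloses_rev[of u z y] by auto
  then have "\<not> induced_prec W y z"
    using not_induced_prec_enclosed[OF _ y(1) z(1) y(2)] by blast
  moreover have "y \<in> alphabet W"
    using y(3) assms(6) unfolding alphabet_def encloses_def by blast
  ultimately show False
    using assms(14) y(1,2) properD[OF y(1)] by blast
qed

end
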